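(* Let the radius distribution $f\in\mathrm{RV}_{-1}$ satisfy, for all $\beta\in(0,1)$, $$\limsup_{n\to\infty}\sup_{n^\beta\le x\le n}\frac{xf(x)}{nf(n)}<\infty\quad\text{and}\quad\limsup_{n\to\infty}\frac{\sum_{i=1}^{n^\beta}f(i)}{f(n)\,n\ln n}<\infty.$$ Then $$\lim_{\alpha\to0}\limsup_{n\to\infty}\mathbb{P}(T_nf(n)<\alpha)=0.$$
   Context: Covering process: $R$ takes values in $\{1,2,\dots\}$, $f(r)=\mathbb{P}(R\ge r)$ for real $r\ge1$. On $\mathbb{Z}/n\mathbb{Z}$, let $(R_k)$ be i.i.d. copies of $R$, $(U_k)$ i.i.d. uniform on $\mathbb{Z}/n\mathbb{Z}$, independent; $\mathcal{O}_k=\{U_k,\dots,U_k+R_k-1\}$ (mod $n$), $C_0=\emptyset$, $C_k=C_{k-1}\cup\mathcal{O}_k$; with an independent rate-one Poisson process $N(t)$, $X_t=C_{N(t)}$ and $T_n=\inf\{t:X_t=\mathbb{Z}/n\mathbb{Z}\}$. $U\in\mathrm{RV}_p$ means $\lim_{x\to\infty}U(xt)/U(x)=t^p$ for all $t>0$. *)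

theory Defs
  imports "HOL-Probability.Probability"
begin

definition tailf :: "nat pmf \<Rightarrow> real \<Rightarrow> real" where
  "tailf R r = measure_pmf.prob R {k. r \<le> real k}"

definition RV :: "real \<Rightarrow> (real \<Rightarrow> real) \<Rightarrow> bool" where
  "RV p U \<longleftrightarrow> (\<forall>t>0. ((\<lambda>x. U (x * t) / U x) \<longlongrightarrow> t powr p) at_top)"

text \<open>One step of randomness: ((R_k, U_k), E_k), with R_k ~ R, U_k uniform on Z/nZ
  (represented by {0..<n}), and E_k ~ Exp(1) the k-th interarrival time of the
  rate-one Poisson process; all independent.\<close>
definition step_measure :: "nat pmf \<Rightarrow> nat \<Rightarrow> ((nat \<times> nat) \<times> real) measure" where
  "step_measure R n =
     measure_pmf (pair_pmf R (pmf_of_set {..<n})) \<Otimes>\<^sub>M density lborel (\<lambda>x. ennreal (exponential_density 1 x))"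

definition cov_space :: "nat pmf \<Rightarrow> nat \<Rightarrow> (nat \<Rightarrow> (nat \<times> nat) \<times> real) measure" where
  "cov_space R n = PiM UNIV (\<lambda>_. step_measure R n)"

definition arc :: "nat \<Rightarrow> nat \<Rightarrow> nat \<Rightarrow> nat set" where
  "arc n u r = {(u + j) mod n | j. j < r}"

text \<open>C_m = O_1 \<union> ... \<union> O_m (the k-th arc uses the step with index k-1).\<close>
definition covered :: "nat \<Rightarrow> (nat \<Rightarrow> (nat \<times> nat) \<times> real) \<Rightarrow> nat \<Rightarrow> nat set" where
  "covered n \<omega> m = (\<Union>k<m. arc n (snd (fst (\<omega> k))) (fst (fst (\<omega> k))))"

text \<open>Poisson process N(t): number of arrivals S_j = E_0 + ... + E_(j-1), j \<ge> 1, up to time t.\<close>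
definition poisson_count :: "(nat \<Rightarrow> (nat \<times> nat) \<times> real) \<Rightarrow> real \<Rightarrow> nat" where
  "poisson_count \<omega> t = card {j::nat. 1 \<le> j \<and> (\<Sum>i<j. snd (\<omega> i)) \<le> t}"

definition cover_time :: "nat \<Rightarrow> (nat \<Rightarrow> (nat \<times> nat) \<times> real) \<Rightarrow> real" where
  "cover_time n \<omega> = Inf {t. 0 \<le> t \<and> covered n \<omega> (poisson_count \<omega> t) = {..<n}}"

end

(* Put t = alpha / f(n). The arcs arrive at the jumps of the rate-one Poisson clock, so by an
   exponential Chernoff bound fewer than m + 1 arcs, m = ceil (2 t), arrive before time t except
   with probability exp (-(ln 4 - 1) t); hence P(T_n < t) is essentially the probability that m arcs
   already cover the cycle. The second moment method applied to the number of uncovered points bounds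
   that probability by 1 / (n (1 - p_n)^m) plus a correlation term, where p_n = (f(1) + ... + f(n)) / n
   is the probability that one arc covers a given point; the correlation term is controlled by the
   probability that one arc covers two points at circular distance d. Splitting the sums at sqrt n,
   the hypotheses on f give p_n <= K f(n) ln n and a matching bound for the pair probabilities, so for
   12 K alpha < 1 the limit superior in n is at most 2 (exp (6 K alpha) / (1 - 6 K alpha) - 1),
   which vanishes as alpha -> 0. *)

theory Submission
  imports Defs
begin

lemma power_le_sq_power_mult_exp:
  fixes p Q :: real and m :: nat
  assumes "0 \<le> 1 - 2 * p + Q" "(1 - p)\<^sup>2 \<ge> 1/2" "0 \<le> Q"
  shows "(1 - 2 * p + Q) ^ m \<le> ((1 - p) ^ m)\<^sup>2 * exp (2 * real m * Q)"
proof -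
  have pos: "(1 - p)\<^sup>2 > 0" using assms(2) by linarith
  have "(1 - p)\<^sup>2 * (1 + Q / (1 - p)\<^sup>2) = 1 - 2 * p + p\<^sup>2 + Q"
    using pos by (simp add: field_simps power2_diff)
  then have "1 - 2 * p + Q \<le> (1 - p)\<^sup>2 * (1 + Q / (1 - p)\<^sup>2)"
    using zero_le_power2[of p] by linarith
  also have "\<dots> \<le> (1 - p)\<^sup>2 * exp (Q / (1 - p)\<^sup>2)"
    using pos by (intro mult_left_mono) (auto simp: add.commute exp_ge_add_one_self)
  also have "\<dots> \<le> (1 - p)\<^sup>2 * exp (2 * Q)"
  proof -
    have "Q * 1 \<le> Q * (2 * (1 - p)\<^sup>2)"
      using assms(2,3) by (intro mult_left_mono) auto
    then have "Q / (1 - p)\<^sup>2 \<le> 2 * Q"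
      using pos by (simp add: divide_le_eq mult_ac)
    then show ?thesis using pos by (intro mult_left_mono) auto
  qed
  finally have "(1 - 2 * p + Q) ^ m \<le> ((1 - p)\<^sup>2 * exp (2 * Q)) ^ m"
    by (rule power_mono[OF _ assms(1)])
  also have "\<dots> = ((1 - p) ^ m)\<^sup>2 * exp (2 * real m * Q)"
    by (simp add: power_mult_distrib exp_of_nat_mult[symmetric] power_even_eq[symmetric] mult_ac
        flip: power_mult)
  finally show ?thesis .
qed

lemma exp_neg_two_mult_le:
  fixes p :: real
  assumes "0 \<le> p" "p \<le> 1/2"
  shows "exp (- 2 * p) \<le> 1 - p"
proof -
  have "- p - 2 * p\<^sup>2 \<le> ln (1 - p)"
    by (rule ln_one_minus_pos_lower_bound) (use assms in auto)
  moreover have "p * (2 * p) \<le> p * 1"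
    by (rule mult_left_mono) (use assms in auto)
  ultimately have "- 2 * p \<le> ln (1 - p)"
    by (simp add: power2_eq_square)
  then have "exp (- 2 * p) \<le> exp (ln (1 - p))"
    by simp
  also have "\<dots> = 1 - p"
    using assms by simp
  finally show ?thesis .
qed

lemma exp_div_two_power_le:
  fixes t :: real
  assumes "2 * t \<le> real m"
  shows "exp t / 2 ^ Suc m \<le> exp (- (ln 4 - 1) * t)"
proof -
  have "exp (2 * t * ln 2) \<le> exp (real (Suc m) * ln 2)"
    using assms by simp
  also have "\<dots> = 2 ^ Suc m"
    by (subst exp_of_nat_mult) simp
  finally have "exp t / 2 ^ Suc m \<le> exp t / exp (2 * t * ln 2)"
    by (intro divide_left_mono) auto
  also have "\<dots> = exp (- (ln 4 - 1) * t)"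
    using ln_realpow[of 2 2] by (simp add: exp_diff[symmetric] algebra_simps)
  finally show ?thesis .
qed

lemma one_less_ln_4: "1 < ln (4::real)"
proof -
  have "exp 1 < (4::real)"
    using exp_le by linarith
  then have "ln (exp 1) < ln (4::real)"
    by (subst ln_less_cancel_iff) auto
  then show ?thesis
    by simp
qed

lemma sum_inverse_le_ln:
  assumes "1 \<le> a" "a \<le> b"
  shows "(\<Sum>i\<in>{a<..b}. 1 / real i) \<le> ln (real b) - ln (real a)"
  using assms(2)
proof (induct b rule: dec_induct)
  case (step k)
  have k: "1 \<le> k" using step assms by simp
  have "ln (real k / real (Suc k)) \<le> real k / real (Suc k) - 1"
    using k by (intro ln_le_minus_one) auto
  also have "\<dots> = - (1 / real (Suc k))" by (simp add: field_simps)
  finally have "1 / real (Suc k) \<le> ln (real (Suc k)) - ln (real k)"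
    using k by (simp add: ln_div)
  moreover have "{a<..Suc k} = insert (Suc k) {a<..k}" using step by auto
  ultimately show ?case using step by simp
qed simp

lemma sum_powr_neg_le:
  assumes g: "0 \<le> g" "g < 1"
  shows "(\<Sum>d=1..N. real d powr (- g)) \<le> real N powr (1 - g) / (1 - g)"
proof (induct N)
  case (Suc N)
  show ?case
  proof (cases "N = 0")
    case False
    then have N: "1 \<le> real N" by simp
    obtain z where z: "real N < z" "z < real (Suc N)"
      "real (Suc N) powr (1 - g) - real N powr (1 - g) = (1 - g) * z powr (- g)"
      using MVT2[of "real N" "real (Suc N)" "\<lambda>x. x powr (1 - g)" "\<lambda>x. (1 - g) * x powr (1 - g - 1)"] N
      by (force intro!: derivative_eq_intros)
    have "real (Suc N) powr (- g) \<le> z powr (- g)"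
      using z N g by (intro powr_mono2') auto
    then have "(1 - g) * real (Suc N) powr (- g) \<le> real (Suc N) powr (1 - g) - real N powr (1 - g)"
      using z(3) g by (simp add: mult_left_mono)
    then have "real (Suc N) powr (- g) \<le> (real (Suc N) powr (1 - g) - real N powr (1 - g)) / (1 - g)"
      using g by (simp add: field_simps)
    then show ?thesis using Suc by (simp add: diff_divide_distrib)
  qed (use g in \<open>simp add: field_simps\<close>)
qed simp

lemma sum_scaled_powr_neg_le:
  assumes g: "0 \<le> g" "g < 1" and n: "1 \<le> n"
  shows "(\<Sum>d=1..n-1. exp g * real n powr g * real d powr (- g) - 1) \<le> real n * (exp g / (1 - g) - 1) + 1"
proof -
  have "(\<Sum>d=1..n-1. exp g * real n powr g * real d powr (- g) - 1)
      = exp g * real n powr g * (\<Sum>d=1..n-1. real d powr (- g)) - real (n - 1)"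
    by (simp add: sum_subtractf sum_distrib_left)
  also have "\<dots> \<le> exp g * real n powr g * (real (n - 1) powr (1 - g) / (1 - g)) - real (n - 1)"
    using sum_powr_neg_le[OF g, of "n - 1"] by (intro diff_right_mono mult_left_mono) auto
  also have "\<dots> \<le> exp g * real n powr g * (real n powr (1 - g) / (1 - g)) - real (n - 1)"
    using g by (intro diff_right_mono mult_left_mono divide_right_mono powr_mono2) auto
  also have "exp g * real n powr g * (real n powr (1 - g) / (1 - g)) = exp g * real n / (1 - g)"
    using n by (simp add: powr_add[symmetric])
  also have "\<dots> - real (n - 1) = real n * (exp g / (1 - g) - 1) + 1"
    using n g by (simp add: field_simps of_nat_diff)
  finally show ?thesis .
qed

lemma card_less_le:
  fixes y :: real
  assumes "0 \<le> y"
  shows "real (card {d\<in>{1..N}. real d < y}) \<le> y"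
proof -
  have "{d\<in>{1..N}. real d < y} \<subseteq> {1..nat \<lfloor>y\<rfloor>}"
    using assms by (auto simp: le_nat_floor)
  then have "card {d\<in>{1..N}. real d < y} \<le> nat \<lfloor>y\<rfloor>"
    using card_mono[of "{1..nat \<lfloor>y\<rfloor>}"] by fastforce
  then show ?thesis
    using assms by linarith
qed

lemma eventually_less_of_Limsup:
  fixes X :: "nat \<Rightarrow> ereal"
  assumes "limsup X < \<infinity>"
  obtains B :: real where "eventually (\<lambda>n. X n < ereal B) sequentially"
proof -
  obtain k :: nat where "limsup X < ereal (real k)"
    using assms less_PInf_Ex_of_nat by auto
  then show thesis using Limsup_lessD that by blast
qed

lemma (in prob_space) prob_none_le_second_moment:
  assumes A: "\<And>x. x \<in> I \<Longrightarrow> A x \<in> events"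
    and pos: "0 < (\<Sum>x\<in>I. prob (A x))"
  shows "prob {\<omega>\<in>space M. \<forall>x\<in>I. \<omega> \<notin> A x}
    \<le> ((\<Sum>x\<in>I. \<Sum>y\<in>I. prob (A x \<inter> A y)) - (\<Sum>x\<in>I. prob (A x))\<^sup>2) / (\<Sum>x\<in>I. prob (A x))\<^sup>2"
proof -
  define \<mu> where "\<mu> = (\<Sum>x\<in>I. prob (A x))"
  define X where "X \<omega> = (\<Sum>x\<in>I. indicator (A x) \<omega> :: real)" for \<omega>
  have X [measurable]: "X \<in> borel_measurable M"
    unfolding X_def using A by (intro borel_measurable_sum) auto
  have X_bounded: "\<bar>X \<omega>\<bar> \<le> real (card I)" for \<omega>
    unfolding X_def using sum_mono[of I "\<lambda>x. indicator (A x) \<omega>" "\<lambda>_. 1::real"]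
    by (simp add: sum_nonneg indicator_le_1)
  have int_X2: "integrable M (\<lambda>\<omega>. (X \<omega>)\<^sup>2)"
    using X_bounded
    by (intro integrable_const_bound[where B="real (card I) ^ 2"])
       (auto simp: abs_le_square_iff[symmetric])
  have int_X: "integrable M X"
    using X_bounded by (intro integrable_const_bound[where B="real (card I)"]) auto
  have E_X: "expectation X = \<mu>"
    unfolding X_def \<mu>_def using A by (simp add: emeasure_eq_measure)
  have E_X2: "expectation (\<lambda>\<omega>. (X \<omega>)\<^sup>2) = (\<Sum>x\<in>I. \<Sum>y\<in>I. prob (A x \<inter> A y))"
  proof -
    have "(\<lambda>\<omega>. (X \<omega>)\<^sup>2) = (\<lambda>\<omega>. \<Sum>x\<in>I. \<Sum>y\<in>I. indicator (A x \<inter> A y) \<omega>)"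
      unfolding X_def power2_eq_square sum_product by (auto simp: indicator_inter_arith)
    then show ?thesis using A by (simp add: emeasure_eq_measure)
  qed
  have var: "variance X = (\<Sum>x\<in>I. \<Sum>y\<in>I. prob (A x \<inter> A y)) - \<mu>\<^sup>2"
    using variance_eq[OF int_X int_X2] E_X E_X2 by simp
  have "{\<omega>\<in>space M. \<forall>x\<in>I. \<omega> \<notin> A x} \<subseteq> {\<omega>\<in>space M. \<bar>X \<omega> - expectation X\<bar> \<ge> \<mu>}"
    using E_X pos unfolding \<mu>_def X_def by auto
  then have "prob {\<omega>\<in>space M. \<forall>x\<in>I. \<omega> \<notin> A x} \<le> prob {\<omega>\<in>space M. \<bar>X \<omega> - expectation X\<bar> \<ge> \<mu>}"
    by (intro finite_measure_mono) auto
  also have "\<dots> \<le> variance X / \<mu>\<^sup>2"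
    using int_X2 pos unfolding \<mu>_def
    by (intro Chebyshev_inequality) (auto simp: power2_eq_square)
  finally show ?thesis
    unfolding var \<mu>_def .
qed

section \<open>The probability space\<close>

abbreviation exp_measure :: "real measure" where
  "exp_measure \<equiv> density lborel (\<lambda>x. ennreal (exponential_density 1 x))"

abbreviation arc_law :: "nat pmf \<Rightarrow> nat \<Rightarrow> (nat \<times> nat) pmf" where
  "arc_law R n \<equiv> pair_pmf R (pmf_of_set {..<n})"

lemma prob_space_exp_measure: "prob_space exp_measure"
  using prob_space_exponential_density[of 1] by simp

lemma step_measure_eq: "step_measure R n = measure_pmf (arc_law R n) \<Otimes>\<^sub>M exp_measure"
  unfolding step_measure_def by simp

lemma prob_space_step_measure: "0 < n \<Longrightarrow> prob_space (step_measure R n)"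
  unfolding step_measure_eq
  by (intro prob_space_pair prob_space_exp_measure) (auto intro: prob_space_measure_pmf)

lemma space_step_measure [simp]: "space (step_measure R n) = UNIV"
  unfolding step_measure_def by (simp add: space_pair_measure)

lemma space_cov_space [simp]: "space (cov_space R n) = UNIV"
  unfolding cov_space_def by (simp add: space_PiM)

lemma product_prob_space_step_measure:
  "0 < n \<Longrightarrow> product_prob_space (\<lambda>_::nat. step_measure R n)"
  by (metis prob_space_step_measure product_prob_space.intro product_prob_space_axioms.intro
      product_sigma_finite.intro prob_space_imp_sigma_finite)

lemma prob_space_cov_space: "0 < n \<Longrightarrow> prob_space (cov_space R n)"
  unfolding cov_space_def by (metis prob_space_PiM prob_space_step_measure)

lemma sets_cov_space_steps_in:
  assumes "finite J" "B \<in> sets (step_measure R n)"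
  shows "{\<omega>. \<forall>k\<in>J. \<omega> k \<in> B} \<in> sets (cov_space R n)"
proof -
  have "{\<omega>\<in>space (cov_space R n). \<forall>k\<in>J. \<omega> k \<in> B} \<in> sets (cov_space R n)"
    using assms unfolding cov_space_def by (intro sets.sets_Collect_finite_All sets_Collect_single) auto
  then show ?thesis by simp
qed

lemma measure_cov_space_steps_in:
  assumes n: "0 < n" and J: "finite J" and B: "B \<in> sets (step_measure R n)"
  shows "measure (cov_space R n) {\<omega>. \<forall>k\<in>J. \<omega> k \<in> B} = measure (step_measure R n) B ^ card J"
proof -
  interpret S: prob_space "step_measure R n" by (rule prob_space_step_measure[OF n])
  interpret P: product_prob_space "\<lambda>_::nat. step_measure R n" UNIV
    by (rule product_prob_space_step_measure[OF n])
  have "emeasure (cov_space R n) {\<omega>. \<forall>k\<in>J. \<omega> k \<in> B} = ennreal (measure (step_measure R n) B ^ card J)"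
    using P.emeasure_PiM_Collect[of J "\<lambda>_. B"] J B unfolding cov_space_def
    by (simp add: space_PiM S.emeasure_eq_measure ennreal_power)
  then show ?thesis by (simp add: measure_def)
qed

lemma measure_step_measure_Times:
  assumes "B \<in> sets borel"
  shows "measure (step_measure R n) (A \<times> B) = measure_pmf.prob (arc_law R n) A * measure exp_measure B"
proof -
  interpret E: prob_space exp_measure by (rule prob_space_exp_measure)
  have "emeasure (step_measure R n) (A \<times> B) = emeasure (arc_law R n) A * emeasure exp_measure B"
    unfolding step_measure_eq using assms
    by (intro sigma_finite_measure.emeasure_pair_measure_Times prob_space_imp_sigma_finite
        prob_space_exp_measure) auto
  then show ?thesis
    by (simp add: measure_def enn2real_mult)
qed

lemma nn_integral_cov_space_prod:
  assumes n: "0 < n" and g: "g \<in> borel_measurable (step_measure R n)"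
  shows "(\<integral>\<^sup>+ \<omega>. (\<Prod>k<m. g (\<omega> k)) \<partial>cov_space R n) = (\<integral>\<^sup>+ s. g s \<partial>step_measure R n) ^ m"
proof -
  interpret P: product_prob_space "\<lambda>_::nat. step_measure R n" UNIV
    by (rule product_prob_space_step_measure[OF n])
  have "(\<integral>\<^sup>+ \<omega>. (\<Prod>k<m. g (\<omega> k)) \<partial>cov_space R n)
     = (\<integral>\<^sup>+ \<omega>. (\<Prod>k<m. g (\<omega> k)) \<partial>distr (cov_space R n) (PiM {..<m} (\<lambda>_. step_measure R n)) (\<lambda>x. restrict x {..<m}))"
    unfolding cov_space_def
    by (subst nn_integral_distr)
       (auto intro!: measurable_restrict borel_measurable_prod_ennreal
         measurable_compose[OF _ g] measurable_component_singleton)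
  also have "\<dots> = (\<integral>\<^sup>+ \<omega>. (\<Prod>k<m. g (\<omega> k)) \<partial>PiM {..<m} (\<lambda>_. step_measure R n))"
    unfolding cov_space_def using P.distr_PiM_restrict_finite[of "{..<m}"] by simp
  also have "\<dots> = (\<Prod>k<m. integral\<^sup>N (step_measure R n) g)"
    by (subst P.product_nn_integral_prod) (auto simp: g)
  finally show ?thesis by simp
qed

lemma nn_integral_step_measure_snd:
  assumes h: "h \<in> borel_measurable borel"
  shows "(\<integral>\<^sup>+ s. h (snd s) \<partial>step_measure R n) = (\<integral>\<^sup>+ x. h x \<partial>exp_measure)"
proof -
  have "(\<lambda>s. h (snd s)) \<in> borel_measurable (measure_pmf (arc_law R n) \<Otimes>\<^sub>M exp_measure)"
    by (rule measurable_compose[OF measurable_snd]) (simp add: h)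
  then have "(\<integral>\<^sup>+ s. h (snd s) \<partial>step_measure R n)
      = (\<integral>\<^sup>+ z. \<integral>\<^sup>+ x. h x \<partial>exp_measure \<partial>measure_pmf (arc_law R n))"
    unfolding step_measure_eq
    by (simp add: sigma_finite_measure.nn_integral_fst[symmetric] prob_space_imp_sigma_finite
        prob_space_exp_measure)
  also have "\<dots> = (\<integral>\<^sup>+ x. h x \<partial>exp_measure)"
    using measure_pmf.emeasure_space_1[of "arc_law R n"] by simp
  finally show ?thesis .
qed

lemma nn_integral_exp_measure_exp:
  fixes a :: real
  assumes a: "a < 1"
  shows "(\<integral>\<^sup>+ x. ennreal (exp (a * x)) \<partial>exp_measure) = ennreal (1 / (1 - a))"
proof -
  interpret D: prob_space "density lborel (exponential_density (1 - a))"
    using prob_space_exponential_density[of "1 - a"] a by simp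
  have dens: "exponential_density 1 x * exp (a * x) = 1 / (1 - a) * exponential_density (1 - a) x" for x
    using a by (auto simp: exponential_density_def exp_add[symmetric] field_simps)
  have "(\<integral>\<^sup>+ x. ennreal (exp (a * x)) \<partial>exp_measure)
      = (\<integral>\<^sup>+ x. ennreal (1 / (1 - a)) * ennreal (exponential_density (1 - a) x) \<partial>lborel)"
    using a by (subst nn_integral_density)
      (auto simp: dens ennreal_mult'[symmetric] exponential_density_nonneg intro!: nn_integral_cong)
  also have "\<dots> = ennreal (1 / (1 - a)) * emeasure (density lborel (exponential_density (1 - a))) UNIV"
    by (subst nn_integral_cmult) (auto simp: emeasure_density)
  finally show ?thesis
    using D.emeasure_space_1 by simp
qed

lemma AE_cov_space_interarrival_nonneg:
  assumes n: "0 < n"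
  shows "AE \<omega> in cov_space R n. \<forall>i. 0 \<le> snd (\<omega> i)"
proof (intro AE_all_countable[THEN iffD2] allI)
  fix i
  interpret P: prob_space "cov_space R n" by (rule prob_space_cov_space[OF n])
  interpret E: prob_space exp_measure by (rule prob_space_exp_measure)
  have "AE x in exp_measure. 0 \<le> x"
    by (subst AE_density) (auto simp: exponential_density_def)
  then have "measure exp_measure {0..} = 1"
    by (subst E.prob_eq_1) (auto simp: atLeast_def)
  moreover have "UNIV \<times> {0..} \<in> sets (step_measure R n)"
    unfolding step_measure_eq by simp
  ultimately have "measure (cov_space R n) {\<omega>. \<forall>k\<in>{i}. \<omega> k \<in> UNIV \<times> {0..}} = 1"
    using measure_cov_space_steps_in[OF n, of "{i}" "UNIV \<times> {0..}"]
    by (simp add: measure_step_measure_Times)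
  then show "AE \<omega> in cov_space R n. 0 \<le> snd (\<omega> i)"
    by (auto dest: P.AE_prob_1 elim: AE_mp simp: mem_Times_iff)
qed

section \<open>Arcs on the cycle\<close>

definition cw_dist :: "nat \<Rightarrow> nat \<Rightarrow> nat \<Rightarrow> nat" where
  "cw_dist n u x = (if u \<le> x then x - u else x + n - u)"

definition circ_dist :: "nat \<Rightarrow> nat \<Rightarrow> nat \<Rightarrow> nat" where
  "circ_dist n x y = min (cw_dist n x y) (n - cw_dist n x y)"

lemma mod_eq_if_less_double:
  assumes "0 < (n::nat)" "z < 2 * n"
  shows "z mod n = (if z < n then z else z - n)"
proof (cases "z < n")
  case False
  then have "z mod n = (z - n) mod n" by (simp add: le_mod_geq)
  then show ?thesis using False assms by simp
qed simp

lemma mem_arc_iff: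
  assumes x: "x < n" and u: "u < n"
  shows "x \<in> arc n u r \<longleftrightarrow> cw_dist n u x < r"
proof
  have n: "0 < n" using x by simp
  assume "x \<in> arc n u r"
  then obtain j where j: "j < r" "(u + j) mod n = x" by (auto simp: arc_def)
  define k where "k = j mod n"
  have "(u + k) mod n = x" "k < n" "k \<le> j"
    using j(2) n by (simp_all add: k_def mod_add_right_eq)
  then have "x = (if u + k < n then u + k else u + k - n)"
    using mod_eq_if_less_double[OF n, of "u + k"] u by simp
  then have "cw_dist n u x = k" using u \<open>k < n\<close> by (auto simp: cw_dist_def)
  then show "cw_dist n u x < r" using j(1) \<open>k \<le> j\<close> by linarith
next
  assume r: "cw_dist n u x < r"
  have "(u + cw_dist n u x) mod n = x"
    using mod_eq_if_less_double[of n "u + cw_dist n u x"] x u by (auto simp: cw_dist_def)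
  then show "x \<in> arc n u r" using r unfolding arc_def by (metis (mono_tags, lifting) mem_Collect_eq)
qed

lemma card_arcs_containing:
  assumes x: "x < n"
  shows "card {u \<in> {..<n}. x \<in> arc n u r} = min r n"
proof -
  have "bij_betw (\<lambda>u. cw_dist n u x) {u \<in> {..<n}. x \<in> arc n u r} {..<min r n}"
    using x by (intro bij_betw_byWitness[where f' = "\<lambda>u. cw_dist n u x"])
      (auto simp: mem_arc_iff cw_dist_def)
  then show ?thesis by (simp add: bij_betw_same_card)
qed

lemma circ_dist_less_if_mem_arc:
  assumes "x < n" "y < n" "x \<noteq> y" "u < n" "x \<in> arc n u r" "y \<in> arc n u r"
  shows "circ_dist n x y < r"
  using assms by (auto simp: mem_arc_iff circ_dist_def cw_dist_def split: if_splits)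

lemma sum_circ_dist_le:
  fixes G :: "nat \<Rightarrow> real"
  assumes x: "x < n" and G: "\<And>d. 0 \<le> G d"
  shows "(\<Sum>y\<in>{..<n}-{x}. G (circ_dist n x y)) \<le> 2 * (\<Sum>d=1..n-1. G d)"
proof -
  let ?d = "cw_dist n x"
  have inj: "inj_on ?d ({..<n}-{x})"
    using x by (intro inj_onI) (auto simp: cw_dist_def split: if_splits)
  have img: "?d ` ({..<n}-{x}) \<subseteq> {1..n-1}"
    using x by (auto simp: cw_dist_def)
  have "(\<Sum>y\<in>{..<n}-{x}. G (circ_dist n x y)) \<le> (\<Sum>y\<in>{..<n}-{x}. G (?d y) + G (n - ?d y))"
    by (intro sum_mono) (auto simp: circ_dist_def min_def G add_increasing add_increasing2)
  also have "\<dots> = (\<Sum>d\<in>?d ` ({..<n}-{x}). G d + G (n - d))"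
    by (rule sum.reindex[OF inj, symmetric, unfolded comp_def])
  also have "\<dots> \<le> (\<Sum>d=1..n-1. G d + G (n - d))"
    by (rule sum_mono2[OF _ img]) (auto intro: add_nonneg_nonneg G)
  also have "\<dots> = (\<Sum>d=1..n-1. G d) + (\<Sum>d=1..n-1. G (n - d))"
    by (rule sum.distrib)
  also have "(\<Sum>d=1..n-1. G (n - d)) = (\<Sum>d=1..n-1. G (n - (n - 1 + 1 - d)))"
    by (rule sum.atLeastAtMost_rev)
  also have "\<dots> = (\<Sum>d=1..n-1. G d)"
    using x by (intro sum.cong) auto
  finally show ?thesis by simp
qed

section \<open>A single arc\<close>

lemma tailf_nonneg: "0 \<le> tailf R x"
  by (simp add: tailf_def)

lemma tailf_le_1: "tailf R x \<le> 1"
  by (simp add: tailf_def)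

lemma tailf_antimono: "x \<le> y \<Longrightarrow> tailf R y \<le> tailf R x"
  unfolding tailf_def by (rule measure_pmf.finite_measure_mono) auto

lemma tailf_one:
  assumes "\<forall>k\<in>set_pmf R. 1 \<le> k"
  shows "tailf R 1 = 1"
  unfolding tailf_def using assms
  by (subst measure_pmf.prob_eq_1) (auto simp: AE_measure_pmf_iff)

lemma tailf_tendsto_0: "(\<lambda>n. tailf R (real n)) \<longlonglongrightarrow> 0"
proof -
  have "(\<lambda>n. measure_pmf.prob R {k. n \<le> k}) \<longlonglongrightarrow> measure_pmf.prob R (\<Inter>n. {k. n \<le> k})"
    by (rule measure_pmf.finite_Lim_measure_decseq) (auto simp: decseq_def)
  moreover have "(\<Inter>n. {k::nat. n \<le> k}) = {}"
    using Suc_n_not_le_n by blast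
  ultimately show ?thesis by (simp add: tailf_def)
qed

definition arcs_through :: "nat \<Rightarrow> nat \<Rightarrow> (nat \<times> nat) set" where
  "arcs_through n x = {(r, u). x \<in> arc n u r}"

definition cover_prob :: "nat pmf \<Rightarrow> nat \<Rightarrow> real" where
  "cover_prob R n = (\<Sum>i=1..n. tailf R (real i)) / real n"

text \<open>An arc containing two points at circular distance \<open>d\<close> has length at least \<open>d + 1\<close>,
  whence the \<open>max\<close> below.\<close>

definition pair_cover_bound :: "nat pmf \<Rightarrow> nat \<Rightarrow> nat \<Rightarrow> real" where
  "pair_cover_bound R n d = (\<Sum>i=1..n. tailf R (real (max i (d + 1)))) / real n"

lemma cover_prob_nonneg: "0 \<le> cover_prob R n"
  by (simp add: cover_prob_def sum_nonneg tailf_nonneg)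

lemma pair_cover_bound_nonneg: "0 \<le> pair_cover_bound R n d"
  by (simp add: pair_cover_bound_def sum_nonneg tailf_nonneg)

lemma nn_integral_card_thresholds:
  fixes N :: nat and thr :: "nat \<Rightarrow> nat"
  shows "(\<integral>\<^sup>+ r. ennreal (real (card {i\<in>{1..N}. thr i \<le> r})) \<partial>measure_pmf R)
     = ennreal (\<Sum>i=1..N. tailf R (real (thr i)))"
proof -
  have "ennreal (real (card {i\<in>{1..N}. thr i \<le> r})) = (\<Sum>i=1..N. indicator {r. thr i \<le> r} r)" for r
  proof -
    have "real (card {i\<in>{1..N}. thr i \<le> r}) = (\<Sum>i\<in>{i\<in>{1..N}. thr i \<le> r}. 1)"
      by simp
    also have "\<dots> = (\<Sum>i=1..N. indicator {r. thr i \<le> r} r)"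
      by (subst sum.inter_filter) (simp_all add: indicator_def of_bool_def)
    finally have "ennreal (real (card {i\<in>{1..N}. thr i \<le> r}))
        = (\<Sum>i=1..N. ennreal (indicator {r. thr i \<le> r} r))"
      by simp
    then show ?thesis by (simp only: ennreal_indicator)
  qed
  then have "(\<integral>\<^sup>+ r. ennreal (real (card {i\<in>{1..N}. thr i \<le> r})) \<partial>measure_pmf R)
      = (\<Sum>i=1..N. emeasure (measure_pmf R) {r. thr i \<le> r})"
    by (simp add: nn_integral_sum)
  also have "\<dots> = ennreal (\<Sum>i=1..N. tailf R (real (thr i)))"
    by (simp add: tailf_def measure_pmf.emeasure_eq_measure sum_ennreal)
  finally show ?thesis .
qed

lemma emeasure_pair_pmf_sections:
  "emeasure (pair_pmf A B) S = (\<integral>\<^sup>+ a. emeasure (measure_pmf B) {b. (a, b) \<in> S} \<partial>measure_pmf A)"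
proof -
  have "emeasure (pair_pmf A B) S = (\<integral>\<^sup>+ a. \<integral>\<^sup>+ b. indicator S (a, b) \<partial>measure_pmf B \<partial>measure_pmf A)"
    by (simp add: nn_integral_pair_pmf'[symmetric])
  also have "\<dots> = (\<integral>\<^sup>+ a. emeasure (measure_pmf B) {b. (a, b) \<in> S} \<partial>measure_pmf A)"
    by (intro nn_integral_cong) (simp add: indicator_def[abs_def] flip: nn_integral_indicator)
  finally show ?thesis .
qed

lemma emeasure_arc_law:
  assumes "0 < n"
  shows "emeasure (arc_law R n) S
    = (\<integral>\<^sup>+ r. ennreal (real (card {u \<in> {..<n}. (r, u) \<in> S})) * ennreal (1 / real n) \<partial>measure_pmf R)"
  unfolding emeasure_pair_pmf_sections
proof (intro nn_integral_cong)
  fix r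
  have "measure_pmf.prob (pmf_of_set {..<n}) {b. (r, b) \<in> S}
      = card ({..<n} \<inter> {b. (r, b) \<in> S}) / card {..<n}"
    by (rule measure_pmf_of_set) (use assms in auto)
  also have "{..<n} \<inter> {b. (r, b) \<in> S} = {u \<in> {..<n}. (r, u) \<in> S}" by auto
  finally show "emeasure (pmf_of_set {..<n}) {b. (r, b) \<in> S}
      = ennreal (real (card {u \<in> {..<n}. (r, u) \<in> S})) * ennreal (1 / real n)"
    by (simp add: measure_pmf.emeasure_eq_measure ennreal_mult[symmetric])
qed

lemma prob_arcs_through:
  assumes x: "x < n"
  shows "measure_pmf.prob (arc_law R n) (arcs_through n x) = cover_prob R n"
proof -
  have "card {i\<in>{1..n}. i \<le> r} = min r n" for r
  proof -
    have "{i\<in>{1..n}. i \<le> r} = {1..min r n}" by auto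
    then show ?thesis by simp
  qed
  then have "emeasure (arc_law R n) (arcs_through n x)
      = (\<integral>\<^sup>+ r. ennreal (real (card {i\<in>{1..n}. i \<le> r})) * ennreal (1 / real n) \<partial>measure_pmf R)"
    using x card_arcs_containing[OF x] by (simp add: emeasure_arc_law arcs_through_def)
  also have "\<dots> = (\<integral>\<^sup>+ r. ennreal (real (card {i\<in>{1..n}. i \<le> r})) \<partial>measure_pmf R) * ennreal (1 / real n)"
    by (rule nn_integral_multc) simp
  also have "\<dots> = ennreal (cover_prob R n)"
    unfolding nn_integral_card_thresholds
    by (simp add: cover_prob_def ennreal_mult[symmetric] sum_nonneg tailf_nonneg)
  finally show ?thesis
    by (simp add: measure_pmf.emeasure_eq_measure cover_prob_nonneg)
qed

lemma prob_arcs_through_both_le: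
  assumes x: "x < n" and y: "y < n" and xy: "x \<noteq> y"
  shows "measure_pmf.prob (arc_law R n) (arcs_through n x \<inter> arcs_through n y)
    \<le> pair_cover_bound R n (circ_dist n x y)"
proof -
  let ?d = "circ_dist n x y"
  have card_le: "card {u \<in> {..<n}. (r, u) \<in> arcs_through n x \<inter> arcs_through n y}
      \<le> card {i\<in>{1..n}. max i (?d + 1) \<le> r}" for r
  proof (cases "?d < r")
    case True
    have "{i\<in>{1..n}. max i (?d + 1) \<le> r} = {1..min r n}" using True by auto
    moreover have "card {u \<in> {..<n}. x \<in> arc n u r \<and> y \<in> arc n u r} \<le> card {u \<in> {..<n}. x \<in> arc n u r}"
      by (intro card_mono) auto
    ultimately show ?thesis
      using card_arcs_containing[OF x, of r] by (simp add: arcs_through_def)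
  next
    case False
    then have "{u \<in> {..<n}. (r, u) \<in> arcs_through n x \<inter> arcs_through n y} = {}"
      using circ_dist_less_if_mem_arc[OF x y xy] by (auto simp: arcs_through_def)
    then show ?thesis by (metis card.empty le0)
  qed
  have "emeasure (arc_law R n) (arcs_through n x \<inter> arcs_through n y)
      \<le> (\<integral>\<^sup>+ r. ennreal (real (card {i\<in>{1..n}. max i (?d + 1) \<le> r})) * ennreal (1 / real n) \<partial>measure_pmf R)"
    using x card_le by (simp add: emeasure_arc_law nn_integral_mono mult_right_mono)
  also have "\<dots> = (\<integral>\<^sup>+ r. ennreal (real (card {i\<in>{1..n}. max i (?d + 1) \<le> r})) \<partial>measure_pmf R) * ennreal (1 / real n)"
    by (rule nn_integral_multc) simp
  also have "\<dots> = ennreal (pair_cover_bound R n ?d)"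
    unfolding nn_integral_card_thresholds
    by (simp add: pair_cover_bound_def ennreal_mult[symmetric] sum_nonneg tailf_nonneg)
  finally show ?thesis
    by (simp add: measure_pmf.emeasure_eq_measure pair_cover_bound_nonneg)
qed

section \<open>Uncovered points after m arcs\<close>

definition uncovered :: "nat \<Rightarrow> nat \<Rightarrow> nat \<Rightarrow> (nat \<Rightarrow> (nat \<times> nat) \<times> real) set" where
  "uncovered n m x = {\<omega>. x \<notin> covered n \<omega> m}"

lemma uncovered_eq_steps: "uncovered n m x = {\<omega>. \<forall>k\<in>{..<m}. \<omega> k \<in> (- arcs_through n x) \<times> UNIV}"
  by (auto simp: uncovered_def covered_def arcs_through_def mem_Times_iff case_prod_beta)

lemma uncovered_Int_eq_steps:
  "uncovered n m x \<inter> uncovered n m y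
    = {\<omega>. \<forall>k\<in>{..<m}. \<omega> k \<in> (- (arcs_through n x \<union> arcs_through n y)) \<times> UNIV}"
  by (auto simp: uncovered_eq_steps mem_Times_iff)

lemma sets_step_measure_Times_UNIV: "A \<times> UNIV \<in> sets (step_measure R n)"
  unfolding step_measure_eq by simp

lemma sets_uncovered: "uncovered n m x \<in> sets (cov_space R n)"
  unfolding uncovered_eq_steps by (intro sets_cov_space_steps_in sets_step_measure_Times_UNIV) simp

lemma measure_cov_space_avoid:
  assumes "0 < n"
  shows "measure (cov_space R n) {\<omega>. \<forall>k\<in>{..<m}. \<omega> k \<in> (- A) \<times> UNIV}
    = measure_pmf.prob (arc_law R n) (- A) ^ m"
  using measure_cov_space_steps_in[OF assms, of "{..<m}" "(- A) \<times> UNIV" R]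
    measure_step_measure_Times[of UNIV R n "- A"] prob_space.prob_space[OF prob_space_exp_measure]
  by (simp add: sets_step_measure_Times_UNIV)

lemma prob_arcs_avoid:
  assumes "x < n"
  shows "measure_pmf.prob (arc_law R n) (- arcs_through n x) = 1 - cover_prob R n"
  using assms measure_pmf.prob_compl[of "arcs_through n x" "arc_law R n"]
  by (simp add: Compl_eq_Diff_UNIV prob_arcs_through)

lemma prob_arcs_avoid_both:
  assumes "x < n" "y < n"
  shows "measure_pmf.prob (arc_law R n) (- (arcs_through n x \<union> arcs_through n y))
    = 1 - 2 * cover_prob R n + measure_pmf.prob (arc_law R n) (arcs_through n x \<inter> arcs_through n y)"
proof -
  have "measure_pmf.prob (arc_law R n) (arcs_through n x \<union> arcs_through n y)
      = 2 * cover_prob R n - measure_pmf.prob (arc_law R n) (arcs_through n x \<inter> arcs_through n y)"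
    using assms by (subst measure_Un3)
      (auto simp: fmeasurable_def measure_pmf.emeasure_eq_measure prob_arcs_through)
  then show ?thesis
    using measure_pmf.prob_compl[of "arcs_through n x \<union> arcs_through n y" "arc_law R n"]
    by (simp add: Compl_eq_Diff_UNIV)
qed

lemma cover_prob_le_1: "0 < n \<Longrightarrow> cover_prob R n \<le> 1"
  using prob_arcs_through[of 0 n R] measure_pmf.prob_le_1 by metis

lemma cover_prob_ge:
  assumes n: "0 < n" and pos: "\<forall>k\<in>set_pmf R. 1 \<le> k"
  shows "1 / real n \<le> cover_prob R n"
proof -
  have "tailf R (real 1) \<le> (\<Sum>i=1..n. tailf R (real i))"
    using n by (intro member_le_sum) (auto simp: tailf_nonneg)
  then show ?thesis
    using tailf_one[OF pos] by (simp add: cover_prob_def divide_right_mono)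
qed

lemma prob_uncovered:
  assumes "x < n"
  shows "measure (cov_space R n) (uncovered n m x) = (1 - cover_prob R n) ^ m"
  using assms by (simp add: uncovered_eq_steps measure_cov_space_avoid prob_arcs_avoid)

lemma prob_uncovered_Int:
  assumes "x < n" "y < n"
  shows "measure (cov_space R n) (uncovered n m x \<inter> uncovered n m y)
    = measure_pmf.prob (arc_law R n) (- (arcs_through n x \<union> arcs_through n y)) ^ m"
  unfolding uncovered_Int_eq_steps by (rule measure_cov_space_avoid) (use assms in simp)

lemma covered_subset: "0 < n \<Longrightarrow> covered n \<omega> m \<subseteq> {..<n}"
  by (auto simp: covered_def arc_def)

lemma covered_mono: "a \<le> b \<Longrightarrow> covered n \<omega> a \<subseteq> covered n \<omega> b"
  unfolding covered_def by (intro UN_mono) auto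

lemma not_all_covered_eq: "0 < n \<Longrightarrow> {\<omega>. covered n \<omega> m \<noteq> {..<n}} = (\<Union>x<n. uncovered n m x)"
  using covered_subset by (auto simp: uncovered_def)

lemma sets_all_covered: "0 < n \<Longrightarrow> {\<omega>. covered n \<omega> m = {..<n}} \<in> sets (cov_space R n)"
proof -
  assume n: "0 < n"
  have "{\<omega>. covered n \<omega> m = {..<n}} = space (cov_space R n) - (\<Union>x<n. uncovered n m x)"
    using not_all_covered_eq[OF n, of m] by auto
  moreover have "(\<Union>x<n. uncovered n m x) \<in> sets (cov_space R n)"
    by (intro sets.finite_UN) (auto simp: sets_uncovered)
  ultimately show ?thesis by (metis sets.compl_sets)
qed

lemma prob_uncovered_Int_le:
  assumes x: "x < n" and y: "y < n" and xy: "x \<noteq> y" and p: "(1 - cover_prob R n)\<^sup>2 \<ge> 1/2"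
  shows "measure (cov_space R n) (uncovered n m x \<inter> uncovered n m y)
    \<le> ((1 - cover_prob R n) ^ m)\<^sup>2 * exp (2 * real m * pair_cover_bound R n (circ_dist n x y))"
proof -
  let ?p = "cover_prob R n" and ?Q = "pair_cover_bound R n (circ_dist n x y)"
  let ?q = "measure_pmf.prob (arc_law R n) (arcs_through n x \<inter> arcs_through n y)"
  have q0: "0 \<le> 1 - 2 * ?p + ?q"
    using prob_arcs_avoid_both[OF x y] measure_nonneg by metis
  have "measure (cov_space R n) (uncovered n m x \<inter> uncovered n m y) = (1 - 2 * ?p + ?q) ^ m"
    by (simp only: prob_uncovered_Int[OF x y] prob_arcs_avoid_both[OF x y])
  also have "\<dots> \<le> (1 - 2 * ?p + ?Q) ^ m"
    using q0 prob_arcs_through_both_le[OF x y xy, of R] by (intro power_mono) auto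
  also have "\<dots> \<le> ((1 - ?p) ^ m)\<^sup>2 * exp (2 * real m * ?Q)"
    using q0 prob_arcs_through_both_le[OF x y xy, of R] p pair_cover_bound_nonneg
    by (intro power_le_sq_power_mult_exp) auto
  finally show ?thesis .
qed

lemma sum_prob_uncovered_Int_le:
  fixes m :: nat
  assumes x: "x < n" and p: "(1 - cover_prob R n)\<^sup>2 \<ge> 1/2"
  defines "a \<equiv> (1 - cover_prob R n) ^ m"
  shows "(\<Sum>y<n. measure (cov_space R n) (uncovered n m x \<inter> uncovered n m y))
    \<le> a + a\<^sup>2 * (real (n - 1) + 2 * (\<Sum>d=1..n-1. exp (2 * real m * pair_cover_bound R n d) - 1))"
proof -
  define G where "G d = exp (2 * real m * pair_cover_bound R n d) - 1" for d
  have G: "0 \<le> G d" for d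
    unfolding G_def using pair_cover_bound_nonneg[of R n d] by simp
  have "(\<Sum>y<n. measure (cov_space R n) (uncovered n m x \<inter> uncovered n m y))
      = a + (\<Sum>y\<in>{..<n}-{x}. measure (cov_space R n) (uncovered n m x \<inter> uncovered n m y))"
    using x by (simp add: sum.remove[of _ x] prob_uncovered a_def)
  also have "\<dots> \<le> a + (\<Sum>y\<in>{..<n}-{x}. a\<^sup>2 * (1 + G (circ_dist n x y)))"
    using prob_uncovered_Int_le[OF x _ _ p] by (intro add_left_mono sum_mono) (auto simp: a_def G_def)
  also have "\<dots> = a + a\<^sup>2 * (real (n - 1) + (\<Sum>y\<in>{..<n}-{x}. G (circ_dist n x y)))"
    using x by (simp add: sum_distrib_left[symmetric] sum.distrib)
  also have "\<dots> \<le> a + a\<^sup>2 * (real (n - 1) + 2 * (\<Sum>d=1..n-1. G d))"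
    using sum_circ_dist_le[OF x G] by (intro add_left_mono mult_left_mono) auto
  finally show ?thesis unfolding G_def .
qed

lemma prob_all_covered_le:
  assumes n: "0 < n" and p: "(1 - cover_prob R n)\<^sup>2 \<ge> 1/2"
  shows "measure (cov_space R n) {\<omega>. covered n \<omega> m = {..<n}}
    \<le> 1 / (real n * (1 - cover_prob R n) ^ m)
      + 2 / real n * (\<Sum>d=1..n-1. exp (2 * real m * pair_cover_bound R n d) - 1)"
proof -
  interpret P: prob_space "cov_space R n" by (rule prob_space_cov_space[OF n])
  define a where "a = (1 - cover_prob R n) ^ m"
  define S where "S = (\<Sum>d=1..n-1. exp (2 * real m * pair_cover_bound R n d) - 1)"
  have "1 - cover_prob R n \<noteq> 0" using p by (auto simp: power2_eq_square)
  then have "0 < 1 - cover_prob R n" using cover_prob_le_1[OF n, of R] by linarith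
  then have a: "0 < a" by (simp add: a_def)
  have "P.prob {\<omega>. covered n \<omega> m = {..<n}}
      = P.prob {\<omega>\<in>space (cov_space R n). \<forall>x\<in>{..<n}. \<omega> \<notin> uncovered n m x}"
    using covered_subset[OF n] by (intro arg_cong[where f = P.prob]) (auto simp: uncovered_def)
  also have "\<dots> \<le> ((\<Sum>x<n. \<Sum>y<n. P.prob (uncovered n m x \<inter> uncovered n m y)) - (real n * a)\<^sup>2) / (real n * a)\<^sup>2"
    using P.prob_none_le_second_moment[of "{..<n}" "uncovered n m"] n a
    by (simp add: sets_uncovered prob_uncovered a_def)
  also have "\<dots> \<le> (real n * (a + a\<^sup>2 * (real (n - 1) + 2 * S)) - (real n * a)\<^sup>2) / (real n * a)\<^sup>2"
  proof -
    have "(\<Sum>x<n. \<Sum>y<n. P.prob (uncovered n m x \<inter> uncovered n m y))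
        \<le> (\<Sum>x<n. a + a\<^sup>2 * (real (n - 1) + 2 * S))"
      unfolding a_def S_def by (intro sum_mono sum_prob_uncovered_Int_le p) simp
    then show ?thesis using n by (intro divide_right_mono diff_right_mono) (auto simp: of_nat_diff)
  qed
  also have "\<dots> \<le> 1 / (real n * a) + 2 / real n * S"
    using n a by (simp add: field_simps power2_eq_square of_nat_diff)
  finally show ?thesis by (simp add: a_def S_def)
qed

lemma prob_not_all_covered_le:
  assumes n: "0 < n" and pos: "\<forall>k\<in>set_pmf R. 1 \<le> k"
  shows "measure (cov_space R n) {\<omega>. covered n \<omega> M \<noteq> {..<n}} \<le> real n * (1 - 1 / real n) ^ M"
proof -
  have "measure (cov_space R n) {\<omega>. covered n \<omega> M \<noteq> {..<n}}
      \<le> (\<Sum>x<n. measure (cov_space R n) (uncovered n M x))"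
    unfolding not_all_covered_eq[OF n] by (rule measure_UNION_le) (auto simp: sets_uncovered)
  also have "\<dots> = real n * (1 - cover_prob R n) ^ M"
    by (simp add: prob_uncovered)
  also have "\<dots> \<le> real n * (1 - 1 / real n) ^ M"
    using cover_prob_ge[OF n pos] cover_prob_le_1[OF n, of R]
    by (intro mult_left_mono power_mono) auto
  finally show ?thesis .
qed

section \<open>The Poisson clock\<close>

definition arrival :: "(nat \<Rightarrow> (nat \<times> nat) \<times> real) \<Rightarrow> nat \<Rightarrow> real" where
  "arrival \<omega> j = (\<Sum>i<j. snd (\<omega> i))"

lemma borel_measurable_arrival [measurable]:
  "(\<lambda>\<omega>. arrival \<omega> j) \<in> borel_measurable (cov_space R n)"
  unfolding arrival_def cov_space_def step_measure_def by measurable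

lemma sets_arrival_le: "{\<omega>. arrival \<omega> j \<le> t} \<in> sets (cov_space R n)"
proof -
  have "{\<omega>\<in>space (cov_space R n). arrival \<omega> j \<le> t} \<in> sets (cov_space R n)" by measurable
  then show ?thesis by simp
qed

lemma sets_arrival_gt: "{\<omega>. t < arrival \<omega> j} \<in> sets (cov_space R n)"
proof -
  have "{\<omega>\<in>space (cov_space R n). t < arrival \<omega> j} \<in> sets (cov_space R n)" by measurable
  then show ?thesis by simp
qed

lemma nn_integral_exp_arrival:
  assumes n: "0 < n" and a: "a < 1"
  shows "(\<integral>\<^sup>+ \<omega>. ennreal (exp (a * arrival \<omega> j)) \<partial>cov_space R n) = ennreal (1 / (1 - a)) ^ j"
proof -
  have "(\<integral>\<^sup>+ \<omega>. ennreal (exp (a * arrival \<omega> j)) \<partial>cov_space R n)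
      = (\<integral>\<^sup>+ \<omega>. (\<Prod>i<j. ennreal (exp (a * snd (\<omega> i)))) \<partial>cov_space R n)"
    by (simp add: arrival_def sum_distrib_left exp_sum prod_ennreal)
  also have "\<dots> = (\<integral>\<^sup>+ s. ennreal (exp (a * snd s)) \<partial>step_measure R n) ^ j"
    by (rule nn_integral_cov_space_prod[OF n]) (simp add: step_measure_def)
  also have "\<dots> = ennreal (1 / (1 - a)) ^ j"
    using nn_integral_step_measure_snd[of "\<lambda>x. ennreal (exp (a * x))" R n]
      nn_integral_exp_measure_exp[OF a] by simp
  finally show ?thesis .
qed

lemma prob_arrival_Chernoff:
  assumes n: "0 < n" and a: "a < 1"
  shows "measure (cov_space R n) {\<omega>. c \<le> a * arrival \<omega> j} \<le> exp (- c) / (1 - a) ^ j"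
proof -
  have "{\<omega>\<in>space (cov_space R n). c \<le> a * arrival \<omega> j} \<in> sets (cov_space R n)"
    by measurable
  then have "emeasure (cov_space R n) {\<omega>. c \<le> a * arrival \<omega> j}
      = (\<integral>\<^sup>+ \<omega>. indicator {\<omega>. c \<le> a * arrival \<omega> j} \<omega> \<partial>cov_space R n)"
    by simp
  also have "\<dots> \<le> (\<integral>\<^sup>+ \<omega>. ennreal (exp (- c)) * ennreal (exp (a * arrival \<omega> j)) \<partial>cov_space R n)"
    by (intro nn_integral_mono)
      (auto simp: indicator_def ennreal_mult[symmetric] exp_add[symmetric] simp del: ennreal_1)
  also have "\<dots> = ennreal (exp (- c)) * ennreal (1 / (1 - a)) ^ j"
    by (simp add: nn_integral_cmult nn_integral_exp_arrival[OF n a])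
  also have "\<dots> = ennreal (exp (- c) / (1 - a) ^ j)"
    using a by (simp add: ennreal_power ennreal_mult[symmetric] power_one_over)
  finally show ?thesis
    using a by (simp add: measure_def enn2real_leI)
qed

lemma prob_arrival_le:
  "0 < n \<Longrightarrow> measure (cov_space R n) {\<omega>. arrival \<omega> j \<le> t} \<le> exp t / 2 ^ j"
  using prob_arrival_Chernoff[of n "-1" R "-t" j] by simp

lemma prob_arrival_gt:
  assumes n: "0 < n"
  shows "measure (cov_space R n) {\<omega>. T < arrival \<omega> j} \<le> exp (- T / 2) * 2 ^ j"
proof -
  interpret P: prob_space "cov_space R n" by (rule prob_space_cov_space[OF n])
  have "{\<omega>\<in>space (cov_space R n). T / 2 \<le> 1 / 2 * arrival \<omega> j} \<in> P.events"
    by measurable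
  then have "measure (cov_space R n) {\<omega>. T < arrival \<omega> j}
      \<le> measure (cov_space R n) {\<omega>. T / 2 \<le> 1 / 2 * arrival \<omega> j}"
    by (intro P.finite_measure_mono) auto
  also have "\<dots> \<le> exp (- T / 2) * 2 ^ j"
    using prob_arrival_Chernoff[OF n, of "1/2" R "T / 2" j] by (simp add: power_one_over)
  finally show ?thesis .
qed

lemma arrival_mono:
  "(\<forall>i. 0 \<le> snd (\<omega> i)) \<Longrightarrow> a \<le> b \<Longrightarrow> arrival \<omega> a \<le> arrival \<omega> b"
  unfolding arrival_def by (rule sum_mono2) auto

lemma poisson_count_le:
  assumes nonneg: "\<forall>i. 0 \<le> snd (\<omega> i)" and t: "t < arrival \<omega> (Suc m)"
  shows "poisson_count \<omega> t \<le> m"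
proof -
  have "{j. 1 \<le> j \<and> arrival \<omega> j \<le> t} \<subseteq> {1..m}"
    using arrival_mono[OF nonneg, of "Suc m"] t by (force simp: not_less_eq_eq)
  then show ?thesis
    unfolding poisson_count_def arrival_def[symmetric] using card_mono[of "{1..m}"] by fastforce
qed

lemma poisson_count_ge:
  assumes nonneg: "\<forall>i. 0 \<le> snd (\<omega> i)" and "arrival \<omega> M \<le> T" "T < arrival \<omega> M'"
  shows "M \<le> poisson_count \<omega> T"
proof -
  let ?J = "{j. 1 \<le> j \<and> arrival \<omega> j \<le> T}"
  have "j < M'" if "arrival \<omega> j \<le> T" for j
  proof (rule ccontr)
    assume "\<not> j < M'"
    then have "arrival \<omega> M' \<le> arrival \<omega> j" by (intro arrival_mono[OF nonneg]) simp
    then show False using that assms(3) by simp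
  qed
  then have "?J \<subseteq> {..<M'}" by auto
  moreover have "{1..M} \<subseteq> ?J"
    using arrival_mono[OF nonneg, of _ M] assms(2) by force
  ultimately have "card {1..M} \<le> card ?J"
    by (meson card_mono finite_lessThan finite_subset)
  then show ?thesis
    unfolding poisson_count_def arrival_def[symmetric] by simp
qed

definition covering_times :: "nat \<Rightarrow> (nat \<Rightarrow> (nat \<times> nat) \<times> real) \<Rightarrow> real set" where
  "covering_times n \<omega> = {t. 0 \<le> t \<and> covered n \<omega> (poisson_count \<omega> t) = {..<n}}"

lemma cover_time_less_imp:
  assumes n: "0 < n" and nonneg: "\<forall>i. 0 \<le> snd (\<omega> i)"
    and ne: "covering_times n \<omega> \<noteq> {}" and lt: "cover_time n \<omega> < t"
  shows "arrival \<omega> (Suc m) \<le> t \<or> covered n \<omega> m = {..<n}"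
proof -
  obtain s where s: "s \<in> covering_times n \<omega>" "s < t"
    using cInf_lessD[OF ne] lt by (auto simp: cover_time_def covering_times_def)
  have "covered n \<omega> m = {..<n}" if "t < arrival \<omega> (Suc m)"
  proof -
    have "poisson_count \<omega> s \<le> m"
      using poisson_count_le[OF nonneg] s(2) that by simp
    then have "{..<n} \<subseteq> covered n \<omega> m"
      using covered_mono s(1) by (fastforce simp: covering_times_def)
    then show ?thesis
      using covered_subset[OF n] by blast
  qed
  then show ?thesis by fastforce
qed

lemma covering_times_empty_imp:
  assumes n: "0 < n" and nonneg: "\<forall>i. 0 \<le> snd (\<omega> i)"
    and empty: "covering_times n \<omega> = {}" and T: "0 \<le> T"
  shows "arrival \<omega> M' \<le> T \<or> T < arrival \<omega> M \<or> covered n \<omega> M \<noteq> {..<n}"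
proof (rule ccontr)
  assume "\<not> ?thesis"
  then have "M \<le> poisson_count \<omega> T" "covered n \<omega> M = {..<n}"
    using poisson_count_ge[OF nonneg] by (auto simp: not_le not_less)
  then have "covered n \<omega> (poisson_count \<omega> T) = {..<n}"
    using covered_mono covered_subset[OF n] by blast
  then show False
    using empty T by (auto simp: covering_times_def)
qed

lemma exists_arrival_window:
  assumes n: "0 < n" and e: "0 < e"
  obtains T M' where "0 \<le> T" "measure (cov_space R n) {\<omega>. arrival \<omega> M' \<le> T} \<le> e"
    "measure (cov_space R n) {\<omega>. T < arrival \<omega> M} \<le> e"
proof -
  define T where "T = max 0 (2 * ln (2 ^ M / e))"
  obtain M' where M': "exp T / e < 2 ^ M'"
    using real_arch_pow[of 2 "exp T / e"] by auto
  have "measure (cov_space R n) {\<omega>. arrival \<omega> M' \<le> T} \<le> exp T / 2 ^ M'"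
    by (rule prob_arrival_le[OF n])
  also have "\<dots> \<le> e"
    using M' e by (simp add: divide_le_eq pos_divide_less_eq mult.commute)
  finally have slow: "measure (cov_space R n) {\<omega>. arrival \<omega> M' \<le> T} \<le> e" .
  have "exp (- T / 2) \<le> exp (- ln (2 ^ M / e))"
    by (simp add: T_def)
  then have "exp (- T / 2) * 2 ^ M \<le> e"
    using e by (simp add: exp_minus field_simps)
  then have fast: "measure (cov_space R n) {\<omega>. T < arrival \<omega> M} \<le> e"
    using prob_arrival_gt[OF n, of R T M] by simp
  show thesis
    using that[OF _ slow fast] by (simp add: T_def)
qed

text \<open>On samples where the cycle is never covered, \<^const>\<open>cover_time\<close> is the junk value
  \<open>Inf {}\<close>. These samples form a null set; the following approximate form suffices.\<close>

lemma never_covered_small: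
  assumes n: "0 < n" and pos: "\<forall>k\<in>set_pmf R. 1 \<le> k" and e: "0 < e"
  obtains E where "E \<in> sets (cov_space R n)" "measure (cov_space R n) E \<le> e"
    "AE \<omega> in cov_space R n. covering_times n \<omega> = {} \<longrightarrow> \<omega> \<in> E"
proof -
  interpret P: prob_space "cov_space R n" by (rule prob_space_cov_space[OF n])
  have "(\<lambda>M. real n * (1 - 1 / real n) ^ M) \<longlonglongrightarrow> real n * 0"
    using n by (intro tendsto_mult tendsto_const LIMSEQ_power_zero) (auto simp: field_simps)
  then obtain M where M: "real n * (1 - 1 / real n) ^ M < e / 3"
    using e by (metis (no_types, lifting) eventually_sequentially mult_zero_right order_tendstoD(2)
        order_refl zero_less_divide_iff zero_less_numeral)
  obtain T M' where T: "0 \<le> T" and E12: "P.prob {\<omega>. arrival \<omega> M' \<le> T} \<le> e / 3"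
    "P.prob {\<omega>. T < arrival \<omega> M} \<le> e / 3"
    using exists_arrival_window[OF n, of "e / 3" R M] e by auto
  define E where "E = {\<omega>. arrival \<omega> M' \<le> T} \<union> {\<omega>. T < arrival \<omega> M} \<union> {\<omega>. covered n \<omega> M \<noteq> {..<n}}"
  have sets: "{\<omega>. covered n \<omega> M \<noteq> {..<n}} \<in> P.events"
    using sets.compl_sets[OF sets_all_covered[OF n, of M R]]
    by (simp add: Compl_eq_Diff_UNIV[symmetric] Collect_neg_eq[symmetric])
  then have "E \<in> P.events"
    using sets_arrival_le sets_arrival_gt by (simp add: E_def)
  moreover have "P.prob E \<le> e"
    using E12 prob_not_all_covered_le[OF n pos, of M] M sets sets_arrival_le sets_arrival_gt
      measure_Un_le[of "{\<omega>. arrival \<omega> M' \<le> T} \<union> {\<omega>. T < arrival \<omega> M}" "cov_space R n"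
        "{\<omega>. covered n \<omega> M \<noteq> {..<n}}"]
      measure_Un_le[of "{\<omega>. arrival \<omega> M' \<le> T}" "cov_space R n" "{\<omega>. T < arrival \<omega> M}"]
    unfolding E_def by fastforce
  moreover have "AE \<omega> in cov_space R n. covering_times n \<omega> = {} \<longrightarrow> \<omega> \<in> E"
    using AE_cov_space_interarrival_nonneg[OF n]
    by eventually_elim (use covering_times_empty_imp[OF n, of _ T M' M] T in \<open>auto simp: E_def\<close>)
  ultimately show thesis
    by (rule that)
qed

lemma prob_cover_time_less_le:
  assumes n: "0 < n" and pos: "\<forall>k\<in>set_pmf R. 1 \<le> k"
  shows "measure (cov_space R n) {\<omega>. cover_time n \<omega> < t}
    \<le> exp t / 2 ^ Suc m + measure (cov_space R n) {\<omega>. covered n \<omega> m = {..<n}}"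
proof (rule field_le_epsilon)
  fix e :: real
  assume "0 < e"
  interpret P: prob_space "cov_space R n" by (rule prob_space_cov_space[OF n])
  obtain E where E: "E \<in> P.events" "P.prob E \<le> e"
    "AE \<omega> in cov_space R n. covering_times n \<omega> = {} \<longrightarrow> \<omega> \<in> E"
    using never_covered_small[OF n pos \<open>0 < e\<close>] by blast
  define A where "A = {\<omega>. arrival \<omega> (Suc m) \<le> t}"
  define C where "C = {\<omega>. covered n \<omega> m = {..<n}}"
  have sets: "A \<in> P.events" "C \<in> P.events"
    using sets_all_covered[OF n] sets_arrival_le by (auto simp: A_def C_def)
  have "AE \<omega> in cov_space R n. cover_time n \<omega> < t \<longrightarrow> \<omega> \<in> A \<union> C \<union> E"
    using AE_cov_space_interarrival_nonneg[OF n] E(3)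
    by eventually_elim (simp only: A_def C_def Un_iff mem_Collect_eq, metis cover_time_less_imp[OF n])
  then have "P.prob {\<omega>. cover_time n \<omega> < t} \<le> P.prob (A \<union> C \<union> E)"
    using sets E(1) by (intro P.finite_measure_mono_AE) auto
  also have "\<dots> \<le> P.prob A + P.prob C + P.prob E"
    using sets E(1) measure_Un_le[of "A \<union> C" "cov_space R n" E] measure_Un_le[of A "cov_space R n" C]
    by auto
  finally show "P.prob {\<omega>. cover_time n \<omega> < t} \<le> exp t / 2 ^ Suc m + P.prob C + e"
    using prob_arrival_le[OF n, of R "Suc m" t] E(2) by (simp add: A_def)
qed

section \<open>Consequences of the hypotheses on the tail\<close>

lemma eventually_tailf_pos:
  assumes "RV (-1) (tailf R)"
  shows "eventually (\<lambda>n. 0 < tailf R (real n)) sequentially"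
proof -
  have "\<forall>t>0. ((\<lambda>x. tailf R (x * t) / tailf R x) \<longlongrightarrow> t powr (-1)) at_top"
    using assms unfolding RV_def .
  then have "((\<lambda>x. tailf R (x * 1) / tailf R x) \<longlongrightarrow> 1 powr (-1)) at_top"
    by (metis zero_less_one)
  then have "eventually (\<lambda>x. tailf R (x * 1) / tailf R x \<noteq> 0) at_top"
    by (rule tendsto_imp_eventually_ne) simp
  then have "eventually (\<lambda>x. 0 < tailf R x) at_top"
    by eventually_elim (use tailf_nonneg in \<open>auto simp: less_le\<close>)
  then show ?thesis
    using filterlim_real_sequentially unfolding filterlim_iff by blast
qed

lemma eventually_cover_prob_le:
  assumes "0 < c"
  shows "eventually (\<lambda>n. cover_prob R n \<le> c) sequentially"
proof -
  obtain N where N: "\<And>i. N \<le> i \<Longrightarrow> tailf R (real i) < c / 2"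
    using order_tendstoD(2)[OF tailf_tendsto_0 half_gt_zero[OF assms]]
    unfolding eventually_sequentially by blast
  have "cover_prob R n \<le> c" if n: "2 * N / c \<le> real n" "0 < n" for n
  proof -
    have "(\<Sum>i=1..n. tailf R (real i)) \<le> (\<Sum>i=1..n. c / 2 + (if i < N then 1 else 0))"
    proof (rule sum_mono)
      fix i
      show "tailf R (real i) \<le> c / 2 + (if i < N then 1 else 0)"
        using N[of i] tailf_le_1[of R "real i"] assms by (cases "i < N") auto
    qed
    also have "\<dots> = real n * c / 2 + real (card {i\<in>{1..n}. i < N})"
      by (simp add: sum.distrib sum.If_cases Int_def)
    also have "card {i\<in>{1..n}. i < N} \<le> card {..<N}"
      by (rule card_mono) auto
    finally have "(\<Sum>i=1..n. tailf R (real i)) \<le> real n * c / 2 + real N"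
      by simp
    also have "\<dots> \<le> real n * c"
      using n assms by (simp add: field_simps)
    finally show ?thesis
      using n by (simp add: cover_prob_def divide_le_eq mult.commute)
  qed
  moreover have "eventually (\<lambda>n. 2 * N / c \<le> real n \<and> 0 < n) sequentially"
    unfolding eventually_sequentially
    by (intro exI[of _ "max 1 (nat \<lceil>2 * N / c\<rceil>)"]) (auto simp: nat_ceiling_le_eq)
  ultimately show ?thesis
    by (auto elim: eventually_mono)
qed

definition tail_regular :: "nat pmf \<Rightarrow> real \<Rightarrow> nat \<Rightarrow> bool" where
  "tail_regular R K n \<longleftrightarrow> 2 \<le> n \<and> 0 < tailf R (real n) \<and> cover_prob R n \<le> 1/4
    \<and> cover_prob R n \<le> K * tailf R (real n) * ln (real n)
    \<and> (\<forall>d. real n powr (1/2) \<le> real d \<and> 1 \<le> d \<and> d + 1 \<le> n \<longrightarrow>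
          pair_cover_bound R n d \<le> K * tailf R (real n) * (1 + ln (real n) - ln (real d)))"

lemma cover_prob_le_ln:
  fixes C C' :: real
  assumes n: "2 \<le> n" and C: "0 \<le> C"
    and ratio: "\<forall>x. real n powr (1/2) \<le> x \<and> x \<le> real n \<longrightarrow> x * tailf R x \<le> C * (real n * tailf R (real n))"
    and head: "(\<Sum>i=1..nat \<lfloor>real n powr (1/2)\<rfloor>. tailf R (real i)) \<le> C' * (tailf R (real n) * real n * ln (real n))"
  shows "cover_prob R n \<le> (C + C') * tailf R (real n) * ln (real n)"
proof -
  define s where "s = nat \<lfloor>real n powr (1/2)\<rfloor>"
  define L where "L = real n * tailf R (real n)"
  have L: "0 \<le> L" by (simp add: L_def tailf_nonneg)
  have sqrt_ge_1: "1 \<le> real n powr (1/2)" using n by (simp add: ge_one_powr_ge_zero)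
  have sqrt_le: "real n powr (1/2) \<le> real n" using powr_mono[of "1/2" 1 "real n"] n by simp
  have s: "1 \<le> s" "s \<le> n" "real n powr (1/2) < real (Suc s)"
    using sqrt_ge_1 sqrt_le unfolding s_def by linarith+
  have "0 \<le> ln (real s)"
    using s by simp
  have "(\<Sum>i=1..n. tailf R (real i)) = (\<Sum>i=1..s. tailf R (real i)) + (\<Sum>i\<in>{s<..n}. tailf R (real i))"
    using s by (subst sum.union_disjoint[symmetric]) (auto intro!: sum.cong)
  also have "(\<Sum>i\<in>{s<..n}. tailf R (real i)) \<le> (\<Sum>i\<in>{s<..n}. C * L * (1 / real i))"
  proof (rule sum_mono)
    fix i assume i: "i \<in> {s<..n}"
    then have "real i * tailf R (real i) \<le> C * L"
      using ratio s unfolding L_def by auto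
    then show "tailf R (real i) \<le> C * L * (1 / real i)"
      using i s by (simp add: field_simps)
  qed
  also have "\<dots> = C * L * (\<Sum>i\<in>{s<..n}. 1 / real i)"
    by (simp add: sum_distrib_left)
  also have "\<dots> \<le> C * L * ln (real n)"
  proof -
    have "(\<Sum>i\<in>{s<..n}. 1 / real i) \<le> ln (real n)"
      using sum_inverse_le_ln[OF s(1,2)] \<open>0 \<le> ln (real s)\<close> by linarith
    then show ?thesis using C L by (intro mult_left_mono) auto
  qed
  finally show ?thesis
    using head n unfolding s_def L_def cover_prob_def by (simp add: divide_le_eq algebra_simps)
qed

lemma pair_cover_bound_le_ln:
  fixes C :: real
  assumes C: "0 \<le> C" and d: "1 \<le> d" "d + 1 \<le> n" "real n powr (1/2) \<le> real d"
    and ratio: "\<forall>x. real n powr (1/2) \<le> x \<and> x \<le> real n \<longrightarrow> x * tailf R x \<le> C * (real n * tailf R (real n))"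
  shows "pair_cover_bound R n d \<le> C * tailf R (real n) * (1 + ln (real n) - ln (real d))"
proof -
  define L where "L = real n * tailf R (real n)"
  have L: "0 \<le> L" by (simp add: L_def tailf_nonneg)
  have "(\<Sum>i=1..n. tailf R (real (max i (d + 1)))) \<le> (\<Sum>i=1..n. C * L * (1 / real (max i (d + 1))))"
  proof (rule sum_mono)
    fix i assume i: "i \<in> {1..n}"
    then have "real (max i (d + 1)) * tailf R (real (max i (d + 1))) \<le> C * L"
      using ratio d unfolding L_def by auto
    then show "tailf R (real (max i (d + 1))) \<le> C * L * (1 / real (max i (d + 1)))"
      by (simp add: field_simps)
  qed
  also have "\<dots> = C * L * (\<Sum>i=1..n. 1 / real (max i (d + 1)))"
    by (simp add: sum_distrib_left)
  also have "\<dots> \<le> C * L * (1 + (ln (real n) - ln (real d)))"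
  proof (intro mult_left_mono)
    have "(\<Sum>i=1..n. 1 / real (max i (d + 1))) = (\<Sum>i\<in>{1..d} \<union> {d<..n}. 1 / real (max i (d + 1)))"
      using d by (intro sum.cong) auto
    also have "\<dots> = (\<Sum>i=1..d. 1 / real (max i (d + 1))) + (\<Sum>i\<in>{d<..n}. 1 / real (max i (d + 1)))"
      by (rule sum.union_disjoint) auto
    also have "(\<Sum>i=1..d. 1 / real (max i (d + 1))) = real d / real (d + 1)"
      by (simp add: max_def)
    also have "\<dots> \<le> 1"
      by simp
    also have "(\<Sum>i\<in>{d<..n}. 1 / real (max i (d + 1))) = (\<Sum>i\<in>{d<..n}. 1 / real i)"
      by (rule sum.cong) (auto simp: max_def)
    also have "\<dots> \<le> ln (real n) - ln (real d)"
      using d by (intro sum_inverse_le_ln) auto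
    finally show "(\<Sum>i=1..n. 1 / real (max i (d + 1))) \<le> 1 + (ln (real n) - ln (real d))"
      by simp
  qed (use C L in auto)
  finally have "(\<Sum>i=1..n. tailf R (real (max i (d + 1)))) / real n
      \<le> C * L * (1 + (ln (real n) - ln (real d))) / real n"
    by (rule divide_right_mono) simp
  also have "\<dots> = C * tailf R (real n) * (1 + ln (real n) - ln (real d))"
    using d unfolding L_def by simp
  finally show ?thesis
    unfolding pair_cover_bound_def .
qed

lemma eventually_tail_ratio_le:
  assumes rv: "RV (-1) (tailf R)"
    and c1: "\<forall>\<beta>. 0 < \<beta> \<and> \<beta> < 1 \<longrightarrow>
       limsup (\<lambda>n::nat. SUP x\<in>{real n powr \<beta> .. real n}.
          ereal (x * tailf R x / (real n * tailf R (real n)))) < \<infinity>"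
  obtains C where "1 \<le> C" "eventually (\<lambda>n. \<forall>x. real n powr (1/2) \<le> x \<and> x \<le> real n \<longrightarrow>
      x * tailf R x \<le> C * (real n * tailf R (real n))) sequentially"
proof -
  have "limsup (\<lambda>n::nat. SUP x\<in>{real n powr (1/2) .. real n}.
      ereal (x * tailf R x / (real n * tailf R (real n)))) < \<infinity>"
    using c1 by auto
  then obtain B where B: "eventually (\<lambda>n::nat. (SUP x\<in>{real n powr (1/2) .. real n}.
      ereal (x * tailf R x / (real n * tailf R (real n)))) < ereal B) sequentially"
    by (rule eventually_less_of_Limsup)
  have "eventually (\<lambda>n. \<forall>x. real n powr (1/2) \<le> x \<and> x \<le> real n \<longrightarrow>
      x * tailf R x \<le> max B 1 * (real n * tailf R (real n))) sequentially"
    using B eventually_tailf_pos[OF rv] eventually_gt_at_top[of 0]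
  proof eventually_elim
    case (elim n)
    show ?case
    proof (intro allI impI)
      fix x assume "real n powr (1/2) \<le> x \<and> x \<le> real n"
      then have "ereal (x * tailf R x / (real n * tailf R (real n))) < ereal B"
        using elim(1) by (meson SUP_upper atLeastAtMost_iff le_less_trans)
      then have "x * tailf R x / (real n * tailf R (real n)) \<le> max B 1"
        by simp
      then show "x * tailf R x \<le> max B 1 * (real n * tailf R (real n))"
        using elim by (simp add: divide_le_eq)
    qed
  qed
  then show thesis
    using that[of "max B 1"] by simp
qed

lemma eventually_head_sum_le:
  assumes rv: "RV (-1) (tailf R)"
    and c2: "\<forall>\<beta>. 0 < \<beta> \<and> \<beta> < 1 \<longrightarrow>
       limsup (\<lambda>n::nat. ereal ((\<Sum>i = 1..nat \<lfloor>real n powr \<beta>\<rfloor>. tailf R (real i))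
          / (tailf R (real n) * real n * ln (real n)))) < \<infinity>"
  obtains C' where "0 \<le> C'" "eventually (\<lambda>n. (\<Sum>i = 1..nat \<lfloor>real n powr (1/2)\<rfloor>. tailf R (real i))
      \<le> C' * (tailf R (real n) * real n * ln (real n))) sequentially"
proof -
  have "limsup (\<lambda>n::nat. ereal ((\<Sum>i = 1..nat \<lfloor>real n powr (1/2)\<rfloor>. tailf R (real i))
      / (tailf R (real n) * real n * ln (real n)))) < \<infinity>"
    using c2 by auto
  then obtain B where B: "eventually (\<lambda>n::nat. ereal ((\<Sum>i = 1..nat \<lfloor>real n powr (1/2)\<rfloor>. tailf R (real i))
      / (tailf R (real n) * real n * ln (real n))) < ereal B) sequentially"
    by (rule eventually_less_of_Limsup)
  have "eventually (\<lambda>n. (\<Sum>i = 1..nat \<lfloor>real n powr (1/2)\<rfloor>. tailf R (real i))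
      \<le> max B 0 * (tailf R (real n) * real n * ln (real n))) sequentially"
    using B eventually_tailf_pos[OF rv] eventually_ge_at_top[of 2]
  proof eventually_elim
    case (elim n)
    have D: "0 < tailf R (real n) * real n * ln (real n)"
      using elim by simp
    then have "(\<Sum>i = 1..nat \<lfloor>real n powr (1/2)\<rfloor>. tailf R (real i))
        \<le> B * (tailf R (real n) * real n * ln (real n))"
      using elim(1) by (simp add: divide_less_eq)
    also have "\<dots> \<le> max B 0 * (tailf R (real n) * real n * ln (real n))"
      using D by (intro mult_right_mono) auto
    finally show ?case .
  qed
  then show thesis
    using that[of "max B 0"] by simp
qed

lemma eventually_tail_regular:
  assumes rv: "RV (-1) (tailf R)"
    and c1: "\<forall>\<beta>. 0 < \<beta> \<and> \<beta> < 1 \<longrightarrow>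
       limsup (\<lambda>n::nat. SUP x\<in>{real n powr \<beta> .. real n}.
          ereal (x * tailf R x / (real n * tailf R (real n)))) < \<infinity>"
    and c2: "\<forall>\<beta>. 0 < \<beta> \<and> \<beta> < 1 \<longrightarrow>
       limsup (\<lambda>n::nat. ereal ((\<Sum>i = 1..nat \<lfloor>real n powr \<beta>\<rfloor>. tailf R (real i))
          / (tailf R (real n) * real n * ln (real n)))) < \<infinity>"
  obtains K where "0 < K" "eventually (tail_regular R K) sequentially"
proof -
  obtain C where C: "1 \<le> C" and ratio: "eventually (\<lambda>n. \<forall>x. real n powr (1/2) \<le> x \<and> x \<le> real n \<longrightarrow>
      x * tailf R x \<le> C * (real n * tailf R (real n))) sequentially"
    using eventually_tail_ratio_le[OF rv c1] by blast
  obtain C' where C': "0 \<le> C'" and head: "eventually (\<lambda>n. (\<Sum>i = 1..nat \<lfloor>real n powr (1/2)\<rfloor>. tailf R (real i))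
      \<le> C' * (tailf R (real n) * real n * ln (real n))) sequentially"
    using eventually_head_sum_le[OF rv c2] by blast
  have "eventually (\<lambda>n. cover_prob R n \<le> 1/4) sequentially"
    by (rule eventually_cover_prob_le) simp
  then have "eventually (tail_regular R (C + C')) sequentially"
    using eventually_ge_at_top[of 2] eventually_tailf_pos[OF rv] ratio head
  proof eventually_elim
    case (elim n)
    have "pair_cover_bound R n d \<le> (C + C') * tailf R (real n) * (1 + ln (real n) - ln (real d))"
      if d: "real n powr (1/2) \<le> real d" "1 \<le> d" "d + 1 \<le> n" for d
    proof -
      have "ln (real d) \<le> ln (real n)"
        using d by simp
      then have "C * tailf R (real n) * (1 + ln (real n) - ln (real d))
          \<le> (C + C') * tailf R (real n) * (1 + ln (real n) - ln (real d))"
        using C' tailf_nonneg[of R "real n"] by (intro mult_right_mono) auto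
      moreover have "pair_cover_bound R n d \<le> C * tailf R (real n) * (1 + ln (real n) - ln (real d))"
        using C d elim(4) by (intro pair_cover_bound_le_ln) auto
      ultimately show ?thesis
        by linarith
    qed
    then show ?case
      using elim cover_prob_le_ln[of n C R C'] C by (simp add: tail_regular_def)
  qed
  then show thesis
    using that[of "C + C'"] C C' by simp
qed

lemma mult_cover_prob_le:
  assumes reg: "tail_regular R K n" and K: "0 < K" and f: "tailf R (real n) \<le> \<alpha>"
    and m: "real m \<le> 2 * \<alpha> / tailf R (real n) + 1"
  shows "real m * cover_prob R n \<le> 3 * K * \<alpha> * ln (real n)"
proof -
  define f where "f = tailf R (real n)"
  have f0: "0 < f" and n: "2 \<le> n" and p: "cover_prob R n \<le> K * f * ln (real n)"
    using reg by (auto simp: tail_regular_def f_def)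
  have "real m * cover_prob R n \<le> (2 * \<alpha> / f + 1) * (K * f * ln (real n))"
    using m p cover_prob_nonneg f0 f unfolding f_def[symmetric]
    by (intro mult_mono) auto
  also have "\<dots> = K * (2 * \<alpha> + f) * ln (real n)"
    using f0 by (simp add: field_simps)
  also have "\<dots> \<le> K * (3 * \<alpha>) * ln (real n)"
    using f K n unfolding f_def[symmetric] by (intro mult_right_mono mult_left_mono) auto
  finally show ?thesis by simp
qed

lemma inverse_power_le_powr:
  assumes n: "0 < n" and p: "0 \<le> p" "p \<le> 1/2" and mp: "real m * p \<le> c * ln (real n)"
  shows "1 / (real n * (1 - p) ^ m) \<le> real n powr (2 * c - 1)"
proof -
  have "real n powr (- 2 * c) = exp (- 2 * c * ln (real n))"
    using n by (simp add: powr_def)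
  also have "\<dots> \<le> exp (- 2 * p) ^ m"
    using mp by (simp add: exp_of_nat_mult[symmetric] mult_ac)
  also have "\<dots> \<le> (1 - p) ^ m"
    using exp_neg_two_mult_le[OF p] by (intro power_mono) auto
  finally have low: "real n powr (- 2 * c) \<le> (1 - p) ^ m" .
  have "1 / (real n * (1 - p) ^ m) \<le> 1 / (real n * real n powr (- 2 * c))"
    using low n p by (intro divide_left_mono mult_left_mono mult_pos_pos) auto
  also have "\<dots> = real n powr (2 * c - 1)"
    using n by (simp add: powr_diff powr_minus field_simps)
  finally show ?thesis .
qed

lemma exp_pair_cover_bound_le_small:
  assumes n: "0 < n" and mp: "real m * cover_prob R n \<le> 3 * K * \<alpha> * ln (real n)"
  shows "exp (2 * real m * pair_cover_bound R n d) \<le> real n powr (6 * K * \<alpha>)"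
proof -
  have "pair_cover_bound R n d \<le> cover_prob R n"
    unfolding pair_cover_bound_def cover_prob_def
    by (intro divide_right_mono sum_mono tailf_antimono) auto
  then have "real m * pair_cover_bound R n d \<le> real m * cover_prob R n"
    by (intro mult_left_mono) auto
  then have "2 * real m * pair_cover_bound R n d \<le> 6 * K * \<alpha> * ln (real n)"
    using mp by linarith
  then show ?thesis
    using n by (simp add: powr_def mult_ac)
qed

lemma exp_pair_cover_bound_le_large:
  assumes reg: "tail_regular R K n" and K: "0 < K" and f: "tailf R (real n) \<le> \<alpha>"
    and m: "real m \<le> 2 * \<alpha> / tailf R (real n) + 1"
    and d: "real n powr (1/2) \<le> real d" "1 \<le> d" "d + 1 \<le> n"
  defines "g \<equiv> 6 * K * \<alpha>"
  shows "exp (2 * real m * pair_cover_bound R n d) \<le> exp g * real n powr g * real d powr (- g)"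
proof -
  define f where "f = tailf R (real n)"
  define l where "l = 1 + ln (real n) - ln (real d)"
  have f0: "0 < f" and Q: "pair_cover_bound R n d \<le> K * f * l"
    using reg d by (auto simp: tail_regular_def f_def l_def)
  have "ln (real d) \<le> ln (real n)"
    using d by simp
  then have l0: "0 \<le> l"
    by (simp add: l_def)
  have "2 * real m * pair_cover_bound R n d \<le> 2 * (2 * \<alpha> / f + 1) * (K * f * l)"
    using m Q pair_cover_bound_nonneg unfolding f_def[symmetric]
    by (intro mult_mono) auto
  also have "\<dots> = 2 * K * (2 * \<alpha> + f) * l"
    using f0 by (simp add: field_simps)
  also have "\<dots> \<le> 2 * K * (3 * \<alpha>) * l"
    using f K l0 unfolding f_def[symmetric] by (intro mult_right_mono mult_left_mono) auto
  also have "\<dots> = g + g * ln (real n) + (- g) * ln (real d)"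
    by (simp add: g_def l_def algebra_simps)
  finally have "exp (2 * real m * pair_cover_bound R n d) \<le> exp (g + g * ln (real n) + (- g) * ln (real d))"
    by simp
  also have "\<dots> = exp g * real n powr g * real d powr (- g)"
    using d by (simp add: powr_def exp_add[symmetric])
  finally show ?thesis .
qed

lemma exp_pair_cover_bound_le:
  assumes reg: "tail_regular R K n" and K: "0 < K" and f: "tailf R (real n) \<le> \<alpha>"
    and m: "real m \<le> 2 * \<alpha> / tailf R (real n) + 1" and \<alpha>: "0 < \<alpha>"
    and d: "1 \<le> d" "d + 1 \<le> n"
  defines "g \<equiv> 6 * K * \<alpha>"
  shows "exp (2 * real m * pair_cover_bound R n d) - 1
    \<le> (if real d < real n powr (1/2) then real n powr g else 0)
      + (exp g * real n powr g * real d powr (- g) - 1)"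
proof (cases "real d < real n powr (1/2)")
  case True
  have "real d powr g \<le> real n powr g"
    using d K \<alpha> by (intro powr_mono2) (auto simp: g_def)
  then have "1 \<le> real n powr g * real d powr (- g)"
    using d by (simp add: powr_minus divide_simps)
  then have "1 * 1 \<le> exp g * (real n powr g * real d powr (- g))"
    using K \<alpha> by (intro mult_mono) (auto simp: g_def)
  then show ?thesis
    using exp_pair_cover_bound_le_small[OF _ mult_cover_prob_le[OF reg K f m], of d] d True
    by (simp add: g_def mult.assoc)
next
  case False
  then show ?thesis
    using exp_pair_cover_bound_le_large[OF reg K f m, of d] d by (simp add: g_def)
qed

lemma sum_exp_pair_cover_bound_le:
  assumes reg: "tail_regular R K n" and K: "0 < K" and f: "tailf R (real n) \<le> \<alpha>"
    and m: "real m \<le> 2 * \<alpha> / tailf R (real n) + 1" and \<alpha>: "0 < \<alpha>" "12 * K * \<alpha> < 1"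
  defines "g \<equiv> 6 * K * \<alpha>"
  shows "(\<Sum>d=1..n-1. exp (2 * real m * pair_cover_bound R n d) - 1)
    \<le> real n powr (1/2) * real n powr g + (real n * (exp g / (1 - g) - 1) + 1)"
proof -
  have n: "2 \<le> n" using reg by (simp add: tail_regular_def)
  have g: "0 \<le> g" "g < 1" using K \<alpha> by (simp_all add: g_def)
  define H1 where "H1 d = (if real d < real n powr (1/2) then real n powr g else 0)" for d :: nat
  define H2 where "H2 d = exp g * real n powr g * real d powr (- g) - 1" for d :: nat
  have "(\<Sum>d=1..n-1. exp (2 * real m * pair_cover_bound R n d) - 1) \<le> (\<Sum>d=1..n-1. H1 d + H2 d)"
  proof (rule sum_mono)
    fix d assume "d \<in> {1..n-1}"
    then have "1 \<le> d" "d + 1 \<le> n" using n by auto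
    then show "exp (2 * real m * pair_cover_bound R n d) - 1 \<le> H1 d + H2 d"
      unfolding H1_def H2_def g_def by (rule exp_pair_cover_bound_le[OF reg K f m \<alpha>(1)])
  qed
  also have "\<dots> = (\<Sum>d=1..n-1. H1 d) + (\<Sum>d=1..n-1. H2 d)"
    by (rule sum.distrib)
  also have "(\<Sum>d=1..n-1. H1 d) = real (card {d\<in>{1..n-1}. real d < real n powr (1/2)}) * real n powr g"
    by (simp add: H1_def sum.If_cases Int_def)
  also have "\<dots> \<le> real n powr (1/2) * real n powr g"
    using card_less_le[where y="real n powr (1/2)" and N="n - 1"] by (intro mult_right_mono) auto
  also have "(\<Sum>d=1..n-1. H2 d) \<le> real n * (exp g / (1 - g) - 1) + 1"
    unfolding H2_def using n by (intro sum_scaled_powr_neg_le g) simp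
  finally show ?thesis by simp
qed

lemma prob_cover_time_small_le:
  assumes pos: "\<forall>k\<in>set_pmf R. 1 \<le> k" and reg: "tail_regular R K n" and K: "0 < K"
    and \<alpha>: "0 < \<alpha>" "12 * K * \<alpha> < 1" and f: "tailf R (real n) \<le> \<alpha>"
  defines "t \<equiv> \<alpha> / tailf R (real n)" and "g \<equiv> 6 * K * \<alpha>"
  shows "measure (cov_space R n) {\<omega>. cover_time n \<omega> < t}
    \<le> exp (- (ln 4 - 1) * t) + real n powr (g - 1) + 2 * real n powr (g - 1/2) + 2 / real n
      + 2 * (exp g / (1 - g) - 1)"
proof -
  have n: "2 \<le> n" and f0: "0 < tailf R (real n)" and p: "cover_prob R n \<le> 1/4"
    using reg by (auto simp: tail_regular_def)
  have n0: "0 < n" using n by simp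
  define m where "m = nat \<lceil>2 * t\<rceil>"
  define S where "S = (\<Sum>d=1..n-1. exp (2 * real m * pair_cover_bound R n d) - 1)"
  have "0 < t" using \<alpha> f0 by (simp add: t_def)
  then have m: "2 * t \<le> real m" "real m \<le> 2 * \<alpha> / tailf R (real n) + 1"
    unfolding m_def t_def by linarith+
  have "(3/4)\<^sup>2 \<le> (1 - cover_prob R n)\<^sup>2"
    using p by (intro power_mono) auto
  then have p2: "1/2 \<le> (1 - cover_prob R n)\<^sup>2"
    by (simp add: power2_eq_square)
  have "measure (cov_space R n) {\<omega>. cover_time n \<omega> < t}
      \<le> exp t / 2 ^ Suc m + measure (cov_space R n) {\<omega>. covered n \<omega> m = {..<n}}"
    by (rule prob_cover_time_less_le[OF n0 pos])
  moreover have "exp t / 2 ^ Suc m \<le> exp (- (ln 4 - 1) * t)"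
    by (rule exp_div_two_power_le[OF m(1)])
  moreover have "measure (cov_space R n) {\<omega>. covered n \<omega> m = {..<n}}
      \<le> 1 / (real n * (1 - cover_prob R n) ^ m) + 2 / real n * S"
    unfolding S_def by (rule prob_all_covered_le[OF n0 p2])
  moreover have "1 / (real n * (1 - cover_prob R n) ^ m) \<le> real n powr (g - 1)"
    using inverse_power_le_powr[OF n0 cover_prob_nonneg _ mult_cover_prob_le[OF reg K f m(2)]] p
    by (simp add: g_def mult.assoc)
  moreover have "2 / real n * S
      \<le> 2 / real n * (real n powr (1/2) * real n powr g + (real n * (exp g / (1 - g) - 1) + 1))"
    using sum_exp_pair_cover_bound_le[OF reg K f m(2) \<alpha>] unfolding S_def g_def
    by (intro mult_left_mono) auto
  moreover have "2 / real n * (real n powr (1/2) * real n powr g + (real n * (exp g / (1 - g) - 1) + 1))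
      = 2 * real n powr (g - 1/2) + 2 * (exp g / (1 - g) - 1) + 2 / real n"
  proof -
    have "real n powr (1/2) * real n powr g / real n = real n powr (g - 1/2)"
      using n0 powr_diff[of "real n" "1/2 + g" 1] by (simp add: powr_add algebra_simps)
    then show ?thesis
      using n0 by (simp add: field_simps)
  qed
  ultimately show ?thesis
    by linarith
qed

lemma tendsto_cover_time_bound:
  fixes f :: "nat \<Rightarrow> real"
  assumes f: "eventually (\<lambda>n. 0 < f n) sequentially" "f \<longlonglongrightarrow> 0" and \<alpha>: "0 < \<alpha>" and g: "g < 1/2"
  shows "(\<lambda>n. exp (- (ln 4 - 1) * (\<alpha> / f n)) + real n powr (g - 1) + 2 * real n powr (g - 1/2)
    + 2 / real n + c) \<longlonglongrightarrow> c"
proof -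
  have "filterlim (\<lambda>n. \<alpha> / f n) at_top sequentially"
    by (rule LIM_at_top_divide[OF tendsto_const \<alpha> f(2) f(1)])
  then have "filterlim (\<lambda>n. - (ln 4 - 1) * (\<alpha> / f n)) at_bot sequentially"
    using one_less_ln_4 by (intro filterlim_tendsto_neg_mult_at_bot[OF tendsto_const]) auto
  then have "(\<lambda>n. exp (- (ln 4 - 1) * (\<alpha> / f n))) \<longlonglongrightarrow> 0"
    by (rule filterlim_compose[OF exp_at_bot])
  moreover have "(\<lambda>n. real n powr (g - 1)) \<longlonglongrightarrow> 0" "(\<lambda>n. real n powr (g - 1/2)) \<longlonglongrightarrow> 0"
    using g by (auto intro!: tendsto_neg_powr filterlim_real_sequentially)
  ultimately have "(\<lambda>n. exp (- (ln 4 - 1) * (\<alpha> / f n)) + real n powr (g - 1) + 2 * real n powr (g - 1/2)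
      + 2 / real n + c) \<longlonglongrightarrow> 0 + 0 + 2 * 0 + 0 + c"
    by (intro tendsto_intros lim_const_over_n)
  then show ?thesis by simp
qed

lemma limsup_prob_cover_time_le:
  assumes pos: "\<forall>k\<in>set_pmf R. 1 \<le> k" and K: "0 < K" and reg: "eventually (tail_regular R K) sequentially"
    and \<alpha>: "0 < \<alpha>" "12 * K * \<alpha> < 1"
  shows "limsup (\<lambda>n. ereal (measure (cov_space R n)
      {\<omega> \<in> space (cov_space R n). cover_time n \<omega> * tailf R (real n) < \<alpha>}))
    \<le> ereal (2 * (exp (6 * K * \<alpha>) / (1 - 6 * K * \<alpha>) - 1))"
proof -
  define g where "g = 6 * K * \<alpha>"
  define P where "P n = measure (cov_space R n)
    {\<omega> \<in> space (cov_space R n). cover_time n \<omega> * tailf R (real n) < \<alpha>}" for n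
  define B where "B n = exp (- (ln 4 - 1) * (\<alpha> / tailf R (real n))) + real n powr (g - 1)
    + 2 * real n powr (g - 1/2) + 2 / real n + 2 * (exp g / (1 - g) - 1)" for n :: nat
  have lim: "B \<longlonglongrightarrow> 2 * (exp g / (1 - g) - 1)"
    unfolding B_def using reg \<alpha>
    by (intro tendsto_cover_time_bound tailf_tendsto_0)
      (auto simp: tail_regular_def g_def elim: eventually_mono)
  have "eventually (\<lambda>n. P n \<le> B n) sequentially"
    using reg order_tendstoD(2)[OF tailf_tendsto_0[of R] \<alpha>(1)]
  proof eventually_elim
    case (elim n)
    then have "{\<omega> \<in> space (cov_space R n). cover_time n \<omega> * tailf R (real n) < \<alpha>}
        = {\<omega>. cover_time n \<omega> < \<alpha> / tailf R (real n)}"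
      by (auto simp: tail_regular_def less_divide_eq)
    then show ?case
      using prob_cover_time_small_le[OF pos elim(1) K \<alpha>] elim(2) by (simp add: P_def B_def g_def)
  qed
  then have "limsup (\<lambda>n. ereal (P n)) \<le> limsup (\<lambda>n. ereal (B n))"
    by (intro Limsup_mono) (auto elim: eventually_mono)
  also have "limsup (\<lambda>n. ereal (B n)) = ereal (2 * (exp g / (1 - g) - 1))"
    using lim by (intro lim_imp_Limsup) (auto intro: tendsto_ereal)
  finally show ?thesis
    by (simp add: P_def g_def)
qed

theorem mainTheorem10:
  fixes R :: "nat pmf"
  assumes pos: "\<forall>k\<in>set_pmf R. 1 \<le> k"
    and rv: "RV (-1) (tailf R)"
    and c1: "\<forall>\<beta>. 0 < \<beta> \<and> \<beta> < 1 \<longrightarrow>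
       limsup (\<lambda>n::nat. SUP x\<in>{real n powr \<beta> .. real n}.
          ereal (x * tailf R x / (real n * tailf R (real n)))) < \<infinity>"
    and c2: "\<forall>\<beta>. 0 < \<beta> \<and> \<beta> < 1 \<longrightarrow>
       limsup (\<lambda>n::nat. ereal ((\<Sum>i = 1..nat \<lfloor>real n powr \<beta>\<rfloor>. tailf R (real i))
          / (tailf R (real n) * real n * ln (real n)))) < \<infinity>"
  shows "((\<lambda>\<alpha>. limsup (\<lambda>n::nat. ereal (measure (cov_space R n)
            {\<omega> \<in> space (cov_space R n). cover_time n \<omega> * tailf R (real n) < \<alpha>})))
          \<longlongrightarrow> 0) (at_right 0)"
proof -
  obtain K where K: "0 < K" "eventually (tail_regular R K) sequentially"
    using eventually_tail_regular[OF rv c1 c2] by blast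
  define h where "h \<alpha> = 2 * (exp (6 * K * \<alpha>) / (1 - 6 * K * \<alpha>) - 1)" for \<alpha>
  have "(h \<longlongrightarrow> h 0) (at_right 0)"
    unfolding h_def by (intro tendsto_intros) auto
  then have "((\<lambda>\<alpha>. ereal (h \<alpha>)) \<longlongrightarrow> ereal (h 0)) (at_right 0)"
    by (rule tendsto_ereal)
  then have h: "((\<lambda>\<alpha>. ereal (h \<alpha>)) \<longlongrightarrow> 0) (at_right 0)"
    by (simp add: h_def zero_ereal_def)
  have upper: "eventually (\<lambda>\<alpha>. limsup (\<lambda>n. ereal (measure (cov_space R n)
      {\<omega> \<in> space (cov_space R n). cover_time n \<omega> * tailf R (real n) < \<alpha>})) \<le> ereal (h \<alpha>)) (at_right 0)"
    unfolding eventually_at_right_field h_def using K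
    by (intro exI[of _ "1 / (12 * K)"] conjI allI impI limsup_prob_cover_time_le[OF pos])
      (auto simp: less_divide_eq mult_ac)
  show ?thesis
    by (rule tendsto_sandwich[OF _ upper tendsto_const h])
      (intro always_eventually allI le_Limsup, auto)
qed

end
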